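(* Let $p$ be a prime. Two $n$-tuples $\mathbf A$ and $\mathbf A'$ of $m\times m$ skew-symmetric matrices over $\mathbb F_p$ define isomorphic nilpotent Chernikov $p$-groups $G(\mathbf A)\cong G(\mathbf A')$ (with top $H_m$ and bottom $M^{(n)}$) if and only if $\mathbf A$ and $\mathbf A'$ are weakly congruent.
   Context: $M^{(n)}$ is the direct sum of $n$ quasi-cyclic $p$-groups; fix elements $a_1,\dots,a_n$ of order $p$ generating $M_p^{(n)}=\{a\in M^{(n)}:pa=0\}\cong\mathbb F_p^n$. $H_m$ is the elementary abelian $p$-group of rank $m$. A matrix is skew-symmetric if it is the matrix of a bilinear form $B$ with $B(x,x)=0$ for all $x$. For an $n$-tuple $\mathbf A=(A_1,\dots,A_n)$ of $m\times m$ skew-symmetric matrices over $\mathbb F_p$, with $A_k=(t^{(k)}_{ij})$, the group $G(\mathbf A)$ is the group (written additively) generated by $M^{(n)}$ and elements $\bar h_1,\dots,\bar h_m$ subject to the relations $\bar h_i+a=a+\bar h_i$ for all $a\in M^{(n)}$, $p\bar h_i=0$, and $[\bar h_i,\bar h_j]=\sum_{k=1}^n t^{(k)}_{ij}a_k$ for all $i,j$, where $[u,v]=u+v-u-v$; it is a nilpotent Chernikov $p$-group with top $H_m$ and bottom $M^{(n)}$. For $Q=(q_{ij})\in\mathrm{GL}(n,\mathbb F_p)$ put $\mathbf A\circ Q=(A'_1,\dots,A'_n)$ with $A'_j=\sum_{i=1}^n q_{ij}A_i$; for $P\in\mathrm{GL}(m,\mathbb F_p)$ put $P\circ\mathbf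 A=(PA_1P^\top,\dots,PA_nP^\top)$. Two $n$-tuples $\mathbf A,\mathbf A'$ are weakly congruent if $\mathbf A'=P\circ\mathbf A\circ Q$ for some invertible $P,Q$. *)

theory Defs
  imports Complex_Main "HOL-Algebra.Group" "HOL-Number_Theory.Cong"
begin

text \<open>The quasi-cyclic (Pruefer) p-group Z(p^infinity), realised as the rationals in [0,1)
  whose denominator is a power of p, with addition modulo 1.\<close>
definition prufer_carrier :: "nat \<Rightarrow> rat set" where
  "prufer_carrier p = {q. 0 \<le> q \<and> q < 1 \<and> (\<exists>e::nat. q * of_nat (p ^ e) \<in> \<int>)}"

text \<open>An n-tuple of m x m matrices over F_p: A k i j is the (i,j) entry of A_k (k < n, i,j < m),
  integers read modulo p.  A matrix is skew-symmetric if its bilinear form B satisfies B(x,x)=0.\<close>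
definition skew_symmetric_mod :: "nat \<Rightarrow> nat \<Rightarrow> (nat \<Rightarrow> nat \<Rightarrow> int) \<Rightarrow> bool" where
  "skew_symmetric_mod p m T \<longleftrightarrow>
     (\<forall>x :: nat \<Rightarrow> int. [(\<Sum>i<m. \<Sum>j<m. x i * T i j * x j) = 0] (mod int p))"

definition skew_tuple :: "nat \<Rightarrow> nat \<Rightarrow> nat \<Rightarrow> (nat \<Rightarrow> nat \<Rightarrow> nat \<Rightarrow> int) \<Rightarrow> bool" where
  "skew_tuple p n m A \<longleftrightarrow> (\<forall>k<n. skew_symmetric_mod p m (A k))"

definition invertible_mod :: "nat \<Rightarrow> nat \<Rightarrow> (nat \<Rightarrow> nat \<Rightarrow> int) \<Rightarrow> bool" where
  "invertible_mod p d P \<longleftrightarrow> (\<exists>P' :: nat \<Rightarrow> nat \<Rightarrow> int. \<forall>i<d. \<forall>j<d.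
     [(\<Sum>l<d. P i l * P' l j) = (if i = j then 1 else 0)] (mod int p) \<and>
     [(\<Sum>l<d. P' i l * P l j) = (if i = j then 1 else 0)] (mod int p))"

definition weakly_congruent ::
  "nat \<Rightarrow> nat \<Rightarrow> nat \<Rightarrow> (nat \<Rightarrow> nat \<Rightarrow> nat \<Rightarrow> int) \<Rightarrow> (nat \<Rightarrow> nat \<Rightarrow> nat \<Rightarrow> int) \<Rightarrow> bool" where
  "weakly_congruent p n m A A' \<longleftrightarrow>
     (\<exists>P Q. invertible_mod p m P \<and> invertible_mod p n Q \<and>
        (\<forall>j<n. \<forall>a<m. \<forall>b<m.
           [A' j a b = (\<Sum>i<n. Q i j * (\<Sum>c<m. \<Sum>d<m. P a c * A i c d * P b d))] (mod int p)))"

text \<open>The group G(A): elements x + sum v_i h_i with x in M^(n), 0 <= v_i < p.  Multiplication uses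
  the cocycle beta(v,w) = sum_k (sum_{i<j} v_i w_j t^(k)_ij) a_k with a_k = 1/p in coordinate k,
  which realises the presentation: h_i central over M, p h_i = 0, [h_i,h_j] = sum_k t^(k)_ij a_k.\<close>
definition cocycle :: "nat \<Rightarrow> (nat \<Rightarrow> nat \<Rightarrow> nat \<Rightarrow> int) \<Rightarrow> nat \<Rightarrow> (nat \<Rightarrow> int) \<Rightarrow> (nat \<Rightarrow> int) \<Rightarrow> int" where
  "cocycle m A k v w = (\<Sum>j<m. \<Sum>i<j. v i * w j * A k i j)"

definition chernikov_group ::
  "nat \<Rightarrow> nat \<Rightarrow> nat \<Rightarrow> (nat \<Rightarrow> nat \<Rightarrow> nat \<Rightarrow> int) \<Rightarrow> ((nat \<Rightarrow> rat) \<times> (nat \<Rightarrow> int)) monoid" where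
  "chernikov_group p n m A =
     \<lparr> carrier = {(x, v). (\<forall>k<n. x k \<in> prufer_carrier p) \<and> (\<forall>k\<ge>n. x k = 0) \<and>
                          (\<forall>i<m. 0 \<le> v i \<and> v i < int p) \<and> (\<forall>i\<ge>m. v i = 0)},
       monoid.mult = (\<lambda>(x, v) (y, w).
                 ((\<lambda>k. if k < n then frac (x k + y k + of_int (cocycle m A k v w) / of_nat p) else 0),
                  (\<lambda>i. if i < m then (v i + w i) mod int p else 0))),
       one = ((\<lambda>_. 0), (\<lambda>_. 0)) \<rparr>"

end

theory Submission
  imports Defs
begin

text \<open>
  \<open>G(A)\<close> is a central extension of the top \<open>\<bbbF>\<^sub>p\<^sup>m\<close> by the bottom \<open>M\<close>, the bottom is its
  divisible part, and the commutator of lifts of \<open>v\<close> and \<open>w\<close> lies in the socle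
  \<open>M[p] \<cong> \<bbbF>\<^sub>p\<^sup>n\<close> with \<open>k\<close>-th coordinate \<open>v\<^sup>T A\<^sub>k w\<close>. So an isomorphism maps bottom
  to bottom and induces additive bijections \<open>P\<close> of the top and \<open>Q\<close> of the socle that carry the
  commutator forms of \<open>A\<close> to those of \<open>A'\<close>; in coordinates this is \<open>A' = P \<circ> A \<circ> Q\<close>.
  Conversely, a basis change \<open>Q\<close> of \<open>\<bbbF>\<^sub>p\<^sup>n\<close> lifts to an automorphism of \<open>M\<close>, since
  \<open>Q\<close> is invertible modulo every power of \<open>p\<close>; a basis change \<open>T\<close> of the top is realised by
  \<open>(x, v) \<mapsto> (x + \<gamma>(v), T v)\<close> with a quadratic correction \<open>\<gamma>\<close> absorbing the difference of
  the two cocycles; and tuples that agree modulo \<open>p\<close> define the same group.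
\<close>

definition p_fraction :: "nat \<Rightarrow> rat \<Rightarrow> bool" where
  "p_fraction p q \<longleftrightarrow> (\<exists>e. q * of_nat (p ^ e) \<in> \<int>)"

definition residue_vecs :: "nat \<Rightarrow> nat \<Rightarrow> (nat \<Rightarrow> int) set" where
  "residue_vecs p d = {v. (\<forall>i<d. 0 \<le> v i \<and> v i < int p) \<and> (\<forall>i\<ge>d. v i = 0)}"

definition prufer_vecs :: "nat \<Rightarrow> nat \<Rightarrow> (nat \<Rightarrow> rat) set" where
  "prufer_vecs p n = {x. (\<forall>k<n. x k \<in> prufer_carrier p) \<and> (\<forall>k\<ge>n. x k = 0)}"

definition mod_vec :: "nat \<Rightarrow> nat \<Rightarrow> (nat \<Rightarrow> int) \<Rightarrow> nat \<Rightarrow> int" where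
  "mod_vec p d v = (\<lambda>i. if i < d then v i mod int p else 0)"

definition frac_vec :: "nat \<Rightarrow> (nat \<Rightarrow> rat) \<Rightarrow> nat \<Rightarrow> rat" where
  "frac_vec n x = (\<lambda>k. if k < n then frac (x k) else 0)"

lemma carrier_chernikov_group:
  "carrier (chernikov_group p n m A) = prufer_vecs p n \<times> residue_vecs p m"
  by (auto simp: chernikov_group_def prufer_vecs_def residue_vecs_def)

lemma mult_chernikov_group:
  "(x, v) \<otimes>\<^bsub>chernikov_group p n m A\<^esub> (y, w) =
     (frac_vec n (\<lambda>k. x k + y k + of_int (cocycle m A k v w) / of_nat p), mod_vec p m (\<lambda>i. v i + w i))"
  by (simp add: chernikov_group_def frac_vec_def mod_vec_def)

lemma one_chernikov_group: "\<one>\<^bsub>chernikov_group p n m A\<^esub> = ((\<lambda>_. 0), (\<lambda>_. 0))"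
  by (simp add: chernikov_group_def)

lemma p_fraction_Ints: "q \<in> \<int> \<Longrightarrow> p_fraction p q"
  unfolding p_fraction_def by (rule exI[of _ 0]) simp

lemma p_fraction_add:
  assumes "p_fraction p a" "p_fraction p b"
  shows "p_fraction p (a + b)"
proof -
  from assms obtain e f where "a * of_nat (p ^ e) \<in> \<int>" "b * of_nat (p ^ f) \<in> \<int>"
    unfolding p_fraction_def by blast
  then have "a * of_nat (p ^ e) * of_nat (p ^ f) + b * of_nat (p ^ f) * of_nat (p ^ e) \<in> \<int>"
    by (meson Ints_add Ints_mult Ints_of_nat)
  then have "(a + b) * of_nat (p ^ (e + f)) \<in> \<int>"
    by (simp add: power_add algebra_simps)
  then show ?thesis unfolding p_fraction_def by blast
qed

lemma p_fraction_mult_Ints: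
  assumes "c \<in> \<int>" "p_fraction p a"
  shows "p_fraction p (c * a)"
proof -
  from assms obtain e where "a * of_nat (p ^ e) \<in> \<int>" unfolding p_fraction_def by blast
  then have "c * (a * of_nat (p ^ e)) \<in> \<int>" using assms(1) by (rule Ints_mult[rotated])
  then show ?thesis unfolding p_fraction_def by (auto simp: mult.assoc)
qed

lemma p_fraction_minus: "p_fraction p a \<Longrightarrow> p_fraction p (- a)"
  using p_fraction_mult_Ints[of "-1" p a] by simp

lemma p_fraction_diff: "p_fraction p a \<Longrightarrow> p_fraction p b \<Longrightarrow> p_fraction p (a - b)"
  using p_fraction_add[of p a "- b"] p_fraction_minus[of p b] by simp

lemma p_fraction_divide:
  assumes "p_fraction p a"
  shows "p_fraction p (a / of_nat p)"
proof (cases "p = 0")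
  case True
  then show ?thesis by (simp add: p_fraction_Ints)
next
  case False
  from assms obtain e where "a * of_nat (p ^ e) \<in> \<int>" unfolding p_fraction_def by blast
  moreover have "a / of_nat p * of_nat (p ^ Suc e) = a * of_nat (p ^ e)" using False by simp
  ultimately show ?thesis unfolding p_fraction_def by metis
qed

lemma p_fraction_of_int_divide: "p_fraction p (of_int a / of_nat p)"
  by (intro p_fraction_divide p_fraction_Ints) simp

lemma p_fraction_sum: "(\<And>i. i \<in> S \<Longrightarrow> p_fraction p (f i)) \<Longrightarrow> p_fraction p (\<Sum>i\<in>S. f i)"
  by (induction S rule: infinite_finite_induct) (auto simp: p_fraction_Ints p_fraction_add)

lemma prufer_carrier_iff: "q \<in> prufer_carrier p \<longleftrightarrow> 0 \<le> q \<and> q < 1 \<and> p_fraction p q"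
  by (simp add: prufer_carrier_def p_fraction_def)

lemma of_int_divide_Ints: "int d dvd z \<Longrightarrow> (of_int z / of_nat d :: rat) \<in> \<int>"
  by (cases "d = 0") (auto elim!: dvdE)

lemma cong_imp_divide_diff_Ints:
  "[a = b] (mod int p) \<Longrightarrow> (of_int a / of_nat p - of_int b / of_nat p :: rat) \<in> \<int>"
  using of_int_divide_Ints[of p "a - b"] by (simp add: cong_iff_dvd_diff diff_divide_distrib)

lemma frac_eq_iff_diff_Ints: "frac (a::rat) = frac b \<longleftrightarrow> a - b \<in> \<int>"
proof
  assume "frac a = frac b"
  then have "a - b = of_int (\<lfloor>a\<rfloor> - \<lfloor>b\<rfloor>)" by (simp add: frac_def algebra_simps)
  then show "a - b \<in> \<int>" by simp
next
  assume "a - b \<in> \<int>"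
  then have "frac (b + (a - b)) = frac b" by (rule frac_add_int_right)
  then show "frac a = frac b" by simp
qed

lemma prufer_vecs_p_fraction: "x \<in> prufer_vecs p n \<Longrightarrow> k < n \<Longrightarrow> p_fraction p (x k)"
  by (simp add: prufer_vecs_def prufer_carrier_iff)

lemma frac_vec_in_prufer_vecs:
  assumes "\<And>k. k < n \<Longrightarrow> p_fraction p (x k)"
  shows "frac_vec n x \<in> prufer_vecs p n"
proof -
  have "p_fraction p (frac a)" if "p_fraction p a" for a
    using that unfolding frac_def by (simp add: p_fraction_diff p_fraction_Ints)
  with assms show ?thesis
    by (auto simp: frac_vec_def prufer_vecs_def prufer_carrier_iff frac_lt_1)
qed

lemma frac_vec_id: "x \<in> prufer_vecs p n \<Longrightarrow> frac_vec n x = x"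
  by (auto simp: frac_vec_def prufer_vecs_def prufer_carrier_iff frac_eq)

lemma frac_vec_eq_iff: "frac_vec n x = frac_vec n y \<longleftrightarrow> (\<forall>k<n. x k - y k \<in> \<int>)"
  by (auto simp: frac_vec_def fun_eq_iff frac_eq_iff_diff_Ints)

lemma frac_vec_zero [simp]: "frac_vec n (\<lambda>_. 0) = (\<lambda>_. 0)"
  by (simp add: frac_vec_def fun_eq_iff)

lemma frac_vec_diff_Ints: "k < n \<Longrightarrow> frac_vec n x k - x k \<in> \<int>"
  using frac_eq_iff_diff_Ints[of "frac (x k)" "x k"] by (simp add: frac_vec_def)

lemma frac_vec_eqI:
  assumes "y \<in> prufer_vecs p n" "\<And>k. k < n \<Longrightarrow> x k - y k \<in> \<int>"
  shows "frac_vec n x = y"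
  using frac_vec_eq_iff[of n x y] frac_vec_id[OF assms(1)] assms(2) by simp

lemma prufer_vecs_eqI:
  assumes "x \<in> prufer_vecs p n" "y \<in> prufer_vecs p n" "\<And>k. k < n \<Longrightarrow> x k - y k \<in> \<int>"
  shows "x = y"
  using frac_vec_eqI[OF assms(2,3)] frac_vec_id[OF assms(1)] by simp

lemma mod_vec_in_residue_vecs: "p > 0 \<Longrightarrow> mod_vec p d v \<in> residue_vecs p d"
  by (auto simp: mod_vec_def residue_vecs_def)

lemma mod_vec_id: "v \<in> residue_vecs p d \<Longrightarrow> mod_vec p d v = v"
  by (auto simp: mod_vec_def residue_vecs_def fun_eq_iff)

lemma mod_vec_eq_iff: "mod_vec p d v = mod_vec p d w \<longleftrightarrow> (\<forall>i<d. [v i = w i] (mod int p))"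
  by (auto simp: mod_vec_def fun_eq_iff cong_def)

lemma mod_vec_zero [simp]: "mod_vec p d (\<lambda>_. 0) = (\<lambda>_. 0)"
  by (simp add: mod_vec_def fun_eq_iff)

lemma cong_mod_vec: "i < d \<Longrightarrow> [mod_vec p d v i = v i] (mod int p)"
  by (simp add: mod_vec_def cong_def)

lemma mod_vec_mod_vec_add:
  "mod_vec p d (\<lambda>i. mod_vec p d v i + w i) = mod_vec p d (\<lambda>i. v i + w i)"
  "mod_vec p d (\<lambda>i. v i + mod_vec p d w i) = mod_vec p d (\<lambda>i. v i + w i)"
  by (simp_all add: mod_vec_def mod_add_left_eq mod_add_right_eq fun_eq_iff)

lemma residue_vecs_eqI:
  assumes "v \<in> residue_vecs p d" "w \<in> residue_vecs p d" "\<And>i. i < d \<Longrightarrow> [v i = w i] (mod int p)"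
  shows "v = w"
  using mod_vec_eq_iff[of p d v w] mod_vec_id[OF assms(1)] mod_vec_id[OF assms(2)] assms(3) by simp

section \<open>\<open>G(A)\<close> is a group\<close>

lemma cocycle_add_left:
  "cocycle m A k (\<lambda>i. v i + v' i) w = cocycle m A k v w + cocycle m A k v' w"
  by (simp add: cocycle_def distrib_right sum.distrib)

lemma cocycle_add_right:
  "cocycle m A k v (\<lambda>i. w i + w' i) = cocycle m A k v w + cocycle m A k v w'"
  by (simp add: cocycle_def distrib_left distrib_right sum.distrib)

lemma cocycle_cong:
  assumes "\<And>i. i < m \<Longrightarrow> [v i = v' i] (mod int p)" "\<And>i. i < m \<Longrightarrow> [w i = w' i] (mod int p)"
  shows "[cocycle m A k v w = cocycle m A k v' w'] (mod int p)"
  unfolding cocycle_def using assms by (intro cong_sum cong_mult cong_refl) auto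

lemma cocycle_mod_vec_identity:
  "[cocycle m A k v w + cocycle m A k (mod_vec p m (\<lambda>i. v i + w i)) u
    = cocycle m A k v (mod_vec p m (\<lambda>i. w i + u i)) + cocycle m A k w u] (mod int p)"
proof -
  have "[cocycle m A k (mod_vec p m (\<lambda>i. v i + w i)) u = cocycle m A k v u + cocycle m A k w u] (mod int p)"
    using cocycle_cong[OF cong_mod_vec[where v = "\<lambda>i. v i + w i" and d = m] cong_refl]
    by (simp add: cocycle_add_left)
  from cong_add[OF cong_refl this, of "cocycle m A k v w"]
  have 1: "[cocycle m A k v w + cocycle m A k (mod_vec p m (\<lambda>i. v i + w i)) u
      = cocycle m A k v w + cocycle m A k v u + cocycle m A k w u] (mod int p)"
    by (simp add: add.assoc)
  have "[cocycle m A k v (mod_vec p m (\<lambda>i. w i + u i)) = cocycle m A k v w + cocycle m A k v u] (mod int p)"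
    using cocycle_cong[OF cong_refl cong_mod_vec[where v = "\<lambda>i. w i + u i" and d = m]]
    by (simp add: cocycle_add_right)
  from cong_add[OF this cong_refl, of "cocycle m A k w u"]
  have 2: "[cocycle m A k v (mod_vec p m (\<lambda>i. w i + u i)) + cocycle m A k w u
      = cocycle m A k v w + cocycle m A k v u + cocycle m A k w u] (mod int p)" .
  show ?thesis using cong_trans[OF 1 cong_sym[OF 2]] .
qed

lemma mult_assoc_chernikov_group:
  "((x, v) \<otimes>\<^bsub>chernikov_group p n m A\<^esub> (y, w)) \<otimes>\<^bsub>chernikov_group p n m A\<^esub> (z, u)
    = (x, v) \<otimes>\<^bsub>chernikov_group p n m A\<^esub> ((y, w) \<otimes>\<^bsub>chernikov_group p n m A\<^esub> (z, u))"
proof -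
  let ?c = "\<lambda>k v w. of_int (cocycle m A k v w) / (of_nat p :: rat)"
  let ?vw = "mod_vec p m (\<lambda>i. v i + w i)" and ?wu = "mod_vec p m (\<lambda>i. w i + u i)"
  have "frac_vec n (\<lambda>k. frac_vec n (\<lambda>k. x k + y k + ?c k v w) k + z k + ?c k ?vw u)
      = frac_vec n (\<lambda>k. x k + frac_vec n (\<lambda>k. y k + z k + ?c k w u) k + ?c k v ?wu)"
    unfolding frac_vec_eq_iff
  proof (intro allI impI)
    fix k assume k: "k < n"
    let ?F1 = "frac_vec n (\<lambda>k. x k + y k + ?c k v w) k"
    let ?F2 = "frac_vec n (\<lambda>k. y k + z k + ?c k w u) k"
    have "?F1 + z k + ?c k ?vw u - (x k + ?F2 + ?c k v ?wu)
        = (?F1 - (x k + y k + ?c k v w)) - (?F2 - (y k + z k + ?c k w u))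
          + (of_int (cocycle m A k v w + cocycle m A k ?vw u) / of_nat p
             - of_int (cocycle m A k v ?wu + cocycle m A k w u) / of_nat p)"
      by (simp add: add_divide_distrib algebra_simps)
    also have "\<dots> \<in> \<int>"
      using k cocycle_mod_vec_identity
      by (intro Ints_add Ints_diff frac_vec_diff_Ints cong_imp_divide_diff_Ints)
    finally show "?F1 + z k + ?c k ?vw u - (x k + ?F2 + ?c k v ?wu) \<in> \<int>" .
  qed
  moreover have "mod_vec p m (\<lambda>i. ?vw i + u i) = mod_vec p m (\<lambda>i. v i + ?wu i)"
    by (simp add: mod_vec_mod_vec_add add.assoc)
  ultimately show ?thesis by (simp add: mult_chernikov_group)
qed

lemma l_inv_ex_chernikov_group:
  assumes p: "p > 0" and g: "(x, v) \<in> carrier (chernikov_group p n m A)"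
  shows "\<exists>h\<in>carrier (chernikov_group p n m A).
    h \<otimes>\<^bsub>chernikov_group p n m A\<^esub> (x, v) = \<one>\<^bsub>chernikov_group p n m A\<^esub>"
proof -
  let ?c = "\<lambda>k v w. of_int (cocycle m A k v w) / (of_nat p :: rat)"
  define v' where "v' = mod_vec p m (\<lambda>i. - v i)"
  define x' where "x' = frac_vec n (\<lambda>k. - x k - ?c k v' v)"
  have "(x', v') \<in> carrier (chernikov_group p n m A)"
    using g p unfolding x'_def v'_def carrier_chernikov_group
    by (auto intro!: frac_vec_in_prufer_vecs p_fraction_diff p_fraction_minus
        p_fraction_of_int_divide mod_vec_in_residue_vecs simp: prufer_vecs_p_fraction)
  moreover have "frac_vec n (\<lambda>k. x' k + x k + ?c k v' v) = frac_vec n (\<lambda>_. 0)"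
    unfolding frac_vec_eq_iff x'_def using frac_vec_diff_Ints[of _ n "\<lambda>k. - x k - ?c k v' v"]
    by (simp add: algebra_simps)
  moreover have "mod_vec p m (\<lambda>i. v' i + v i) = mod_vec p m (\<lambda>_. 0)"
    unfolding mod_vec_eq_iff v'_def
  proof (intro allI impI)
    fix i assume "i < m"
    then have "[mod_vec p m (\<lambda>i. - v i) i + v i = - v i + v i] (mod int p)"
      by (intro cong_add cong_mod_vec cong_refl)
    then show "[mod_vec p m (\<lambda>i. - v i) i + v i = 0] (mod int p)" by simp
  qed
  ultimately show ?thesis
    by (intro bexI[of _ "(x', v')"]) (simp_all add: mult_chernikov_group one_chernikov_group)
qed

lemma group_chernikov_group:
  assumes "p > 0"
  shows "group (chernikov_group p n m A)"
proof (rule groupI)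
  let ?G = "chernikov_group p n m A"
  show "g \<otimes>\<^bsub>?G\<^esub> h \<in> carrier ?G" if gh: "g \<in> carrier ?G" "h \<in> carrier ?G" for g h
  proof -
    obtain x v y w where "g = (x, v)" "h = (y, w)" "x \<in> prufer_vecs p n" "y \<in> prufer_vecs p n"
      using gh by (cases g; cases h) (auto simp: carrier_chernikov_group)
    then show ?thesis
      using assms by (auto simp: carrier_chernikov_group mult_chernikov_group mod_vec_in_residue_vecs
          prufer_vecs_p_fraction intro!: frac_vec_in_prufer_vecs p_fraction_add p_fraction_of_int_divide)
  qed
  show "\<one>\<^bsub>?G\<^esub> \<in> carrier ?G"
    using assms by (auto simp: one_chernikov_group carrier_chernikov_group prufer_vecs_def
        residue_vecs_def prufer_carrier_iff p_fraction_Ints)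
  show "\<one>\<^bsub>?G\<^esub> \<otimes>\<^bsub>?G\<^esub> g = g" if "g \<in> carrier ?G" for g
    using that by (auto simp: one_chernikov_group carrier_chernikov_group mult_chernikov_group
        cocycle_def frac_vec_id mod_vec_id)
  show "(g \<otimes>\<^bsub>?G\<^esub> h) \<otimes>\<^bsub>?G\<^esub> l = g \<otimes>\<^bsub>?G\<^esub> (h \<otimes>\<^bsub>?G\<^esub> l)" for g h l
    by (cases g; cases h; cases l) (simp only: mult_assoc_chernikov_group)
  show "\<exists>h\<in>carrier ?G. h \<otimes>\<^bsub>?G\<^esub> g = \<one>\<^bsub>?G\<^esub>" if "g \<in> carrier ?G" for g
    using that l_inv_ex_chernikov_group[OF assms] by (cases g) simp
qed

section \<open>Bottom, socle and commutators of \<open>G(A)\<close>\<close>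

definition socle_vec :: "nat \<Rightarrow> (nat \<Rightarrow> int) \<Rightarrow> nat \<Rightarrow> rat" where
  "socle_vec p u = (\<lambda>k. of_int (u k) / of_nat p)"

definition commutator_vec ::
  "nat \<Rightarrow> nat \<Rightarrow> nat \<Rightarrow> (nat \<Rightarrow> nat \<Rightarrow> nat \<Rightarrow> int) \<Rightarrow> (nat \<Rightarrow> int) \<Rightarrow> (nat \<Rightarrow> int) \<Rightarrow> nat \<Rightarrow> int"
  where "commutator_vec p n m A v w = mod_vec p n (\<lambda>k. cocycle m A k v w - cocycle m A k w v)"

lemma cocycle_zero [simp]: "cocycle m A k (\<lambda>_. 0) w = 0" "cocycle m A k v (\<lambda>_. 0) = 0"
  by (simp_all add: cocycle_def)

lemma socle_vec_in_prufer_vecs: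
  assumes "p > 0" "u \<in> residue_vecs p n"
  shows "socle_vec p u \<in> prufer_vecs p n"
  using assms by (auto simp: socle_vec_def prufer_vecs_def residue_vecs_def prufer_carrier_iff
      divide_less_eq p_fraction_of_int_divide)

lemma socle_vec_eq_iff: "p > 0 \<Longrightarrow> socle_vec p u = socle_vec p u' \<longleftrightarrow> u = u'"
  by (auto simp: socle_vec_def fun_eq_iff)

lemma frac_vec_socle_vec: "p > 0 \<Longrightarrow> frac_vec n (socle_vec p u) = socle_vec p (mod_vec p n u)"
  by (intro frac_vec_eqI[where p = p] socle_vec_in_prufer_vecs mod_vec_in_residue_vecs)
    (auto simp: socle_vec_def intro: cong_imp_divide_diff_Ints cong_sym[OF cong_mod_vec])

lemma mult_socle_vec:
  assumes "p > 0"
  shows "(socle_vec p u, \<lambda>_. 0) \<otimes>\<^bsub>chernikov_group p n m A\<^esub> (socle_vec p u', \<lambda>_. 0)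
    = (socle_vec p (mod_vec p n (\<lambda>k. u k + u' k)), \<lambda>_. 0)"
proof -
  have "(\<lambda>k. socle_vec p u k + socle_vec p u' k) = socle_vec p (\<lambda>k. u k + u' k)"
    by (simp add: socle_vec_def add_divide_distrib fun_eq_iff)
  then show ?thesis using assms by (simp add: mult_chernikov_group frac_vec_socle_vec)
qed

lemma mult_bottom_top:
  assumes "x \<in> prufer_vecs p n" "v \<in> residue_vecs p m"
  shows "(x, \<lambda>_. 0) \<otimes>\<^bsub>chernikov_group p n m A\<^esub> ((\<lambda>_. 0), v) = (x, v)"
  using assms by (simp add: mult_chernikov_group frac_vec_id mod_vec_id)

lemma pow_bottom:
  "(x, \<lambda>_. 0) [^]\<^bsub>chernikov_group p n m A\<^esub> k = (frac_vec n (\<lambda>j. of_nat k * x j), \<lambda>_. 0)"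
proof (induction k)
  case 0
  then show ?case by (simp add: one_chernikov_group)
next
  case (Suc k)
  have "frac_vec n (\<lambda>j. frac_vec n (\<lambda>j. of_nat k * x j) j + x j) = frac_vec n (\<lambda>j. of_nat (Suc k) * x j)"
    unfolding frac_vec_eq_iff using frac_vec_diff_Ints[of _ n "\<lambda>j. of_nat k * x j"]
    by (simp add: algebra_simps)
  then show ?case by (simp add: Suc mult_chernikov_group)
qed

lemma snd_pow:
  "snd ((x, v) [^]\<^bsub>chernikov_group p n m A\<^esub> k) = mod_vec p m (\<lambda>i. int k * v i)"
proof (induction k)
  case 0
  then show ?case by (simp add: one_chernikov_group)
next
  case (Suc k)
  obtain y w where yw: "(x, v) [^]\<^bsub>chernikov_group p n m A\<^esub> k = (y, w)" by fastforce
  have "mod_vec p m (\<lambda>i. w i + v i) = mod_vec p m (\<lambda>i. int (Suc k) * v i)"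
    unfolding mod_vec_eq_iff
  proof (intro allI impI)
    fix i assume "i < m"
    then have "[w i + v i = int k * v i + v i] (mod int p)"
      using Suc yw by (auto intro: cong_add cong_mod_vec)
    then show "[w i + v i = int (Suc k) * v i] (mod int p)" by (simp add: algebra_simps)
  qed
  then show ?case by (simp add: yw mult_chernikov_group)
qed

lemma socle_iff_pow_eq_one:
  assumes "p > 0" "x \<in> prufer_vecs p n"
  shows "(x, \<lambda>_. 0) [^]\<^bsub>chernikov_group p n m A\<^esub> p = \<one>\<^bsub>chernikov_group p n m A\<^esub>
    \<longleftrightarrow> (\<exists>u\<in>residue_vecs p n. x = socle_vec p u)"
proof -
  have "(x, \<lambda>_. 0) [^]\<^bsub>chernikov_group p n m A\<^esub> p = \<one>\<^bsub>chernikov_group p n m A\<^esub>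
      \<longleftrightarrow> (\<forall>k<n. of_nat p * x k \<in> \<int>)"
    using frac_vec_eq_iff[of n "\<lambda>j. of_nat p * x j" "\<lambda>_. 0"]
    by (simp add: pow_bottom one_chernikov_group)
  also have "\<dots> \<longleftrightarrow> (\<exists>u\<in>residue_vecs p n. x = socle_vec p u)"
  proof
    assume int: "\<forall>k<n. of_nat p * x k \<in> \<int>"
    define u where "u = (\<lambda>k. if k < n then \<lfloor>of_nat p * x k\<rfloor> else 0)"
    have x_range: "0 \<le> x k" "x k < 1" if "k < n" for k
      using assms(2) that by (auto simp: prufer_vecs_def prufer_carrier_iff)
    have "x k = of_int (u k) / of_nat p" for k
    proof (cases "k < n")
      case True
      then have "of_int (u k) = of_nat p * x k" using int by (simp add: u_def)
      then show ?thesis using assms(1) by simp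
    qed (use assms(2) in \<open>simp add: u_def prufer_vecs_def\<close>)
    then have "x = socle_vec p u" by (simp add: socle_vec_def fun_eq_iff)
    moreover have "u \<in> residue_vecs p n"
      using x_range assms(1) by (auto simp: residue_vecs_def u_def floor_less_iff)
    ultimately show "\<exists>u\<in>residue_vecs p n. x = socle_vec p u" by blast
  qed (use assms(1) in \<open>auto simp: socle_vec_def\<close>)
  finally show ?thesis .
qed

lemma commutator_identity:
  "(x, v) \<otimes>\<^bsub>chernikov_group p n m A\<^esub> (y, w)
    = (socle_vec p (commutator_vec p n m A v w), \<lambda>_. 0)
      \<otimes>\<^bsub>chernikov_group p n m A\<^esub> ((y, w) \<otimes>\<^bsub>chernikov_group p n m A\<^esub> (x, v))"
proof -
  let ?c = "\<lambda>v w k. of_int (cocycle m A k v w) / (of_nat p :: rat)"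
  have "frac_vec n (\<lambda>k. x k + y k + ?c v w k)
      = frac_vec n (\<lambda>k. socle_vec p (commutator_vec p n m A v w) k
          + frac_vec n (\<lambda>k. y k + x k + ?c w v k) k)"
    unfolding frac_vec_eq_iff
  proof (intro allI impI)
    fix k assume k: "k < n"
    let ?s = "socle_vec p (commutator_vec p n m A v w) k"
    let ?F = "frac_vec n (\<lambda>k. y k + x k + ?c w v k) k"
    have "x k + y k + ?c v w k - (?s + ?F)
        = (of_int (cocycle m A k v w - cocycle m A k w v) / of_nat p - ?s)
          - (?F - (y k + x k + ?c w v k))"
      by (simp add: diff_divide_distrib algebra_simps)
    also have "\<dots> \<in> \<int>"
    proof (rule Ints_diff)
      show "of_int (cocycle m A k v w - cocycle m A k w v) / of_nat p - ?s \<in> \<int>"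
        unfolding socle_vec_def commutator_vec_def
        by (rule cong_imp_divide_diff_Ints) (rule cong_sym[OF cong_mod_vec[OF k]])
    qed (rule frac_vec_diff_Ints[OF k])
    finally show "x k + y k + ?c v w k - (?s + ?F) \<in> \<int>" .
  qed
  moreover have "mod_vec p m (\<lambda>i. v i + w i) = mod_vec p m (mod_vec p m (\<lambda>i. w i + v i))"
    unfolding mod_vec_eq_iff
    using cong_mod_vec[of _ m p "\<lambda>i. w i + v i"] by (simp add: cong_sym add.commute)
  ultimately show ?thesis by (simp add: mult_chernikov_group)
qed

section \<open>Homomorphisms between groups \<open>G(A)\<close>\<close>

definition top_map ::
  "((nat \<Rightarrow> rat) \<times> (nat \<Rightarrow> int) \<Rightarrow> (nat \<Rightarrow> rat) \<times> (nat \<Rightarrow> int)) \<Rightarrow> (nat \<Rightarrow> int) \<Rightarrow> nat \<Rightarrow> int"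
  where "top_map \<phi> v = snd (\<phi> ((\<lambda>_. 0), v))"

definition socle_map :: "nat \<Rightarrow> nat \<Rightarrow>
    ((nat \<Rightarrow> rat) \<times> (nat \<Rightarrow> int) \<Rightarrow> (nat \<Rightarrow> rat) \<times> (nat \<Rightarrow> int)) \<Rightarrow> (nat \<Rightarrow> int) \<Rightarrow> nat \<Rightarrow> int"
  where "socle_map p n \<phi> u =
    (SOME u'. u' \<in> residue_vecs p n \<and> \<phi> (socle_vec p u, \<lambda>_. 0) = (socle_vec p u', \<lambda>_. 0))"

locale chernikov_hom =
  fixes p n m :: nat and A B :: "nat \<Rightarrow> nat \<Rightarrow> nat \<Rightarrow> int"
    and \<phi> :: "(nat \<Rightarrow> rat) \<times> (nat \<Rightarrow> int) \<Rightarrow> (nat \<Rightarrow> rat) \<times> (nat \<Rightarrow> int)"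
  assumes p_pos: "p > 0"
    and hom: "\<phi> \<in> hom (chernikov_group p n m A) (chernikov_group p n m B)"
begin

abbreviation (input) G where "G \<equiv> chernikov_group p n m A"
abbreviation (input) H where "H \<equiv> chernikov_group p n m B"

lemma groups: "group G" "group H"
  using p_pos by (simp_all add: group_chernikov_group)

lemma bottom_in_carrier: "x \<in> prufer_vecs p n \<Longrightarrow> (x, \<lambda>_. 0) \<in> carrier (chernikov_group p n m C)"
  using p_pos by (simp add: carrier_chernikov_group residue_vecs_def)

lemma top_in_carrier: "v \<in> residue_vecs p m \<Longrightarrow> ((\<lambda>_. 0), v) \<in> carrier (chernikov_group p n m C)"
  by (simp add: carrier_chernikov_group prufer_vecs_def prufer_carrier_iff p_fraction_Ints)

lemma hom_bottom:
  assumes x: "x \<in> prufer_vecs p n"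
  shows "snd (\<phi> (x, \<lambda>_. 0)) = (\<lambda>_. 0)"
proof -
  \<comment> \<open>\<open>(x, 0)\<close> is the \<open>p\<close>-th power of \<open>(x/p, 0)\<close>, and \<open>p\<close>-th powers have trivial top.\<close>
  define y where "y = (\<lambda>k. x k / of_nat p)"
  have "0 \<le> x k \<and> x k < 1 \<and> p_fraction p (x k)" if "k < n" for k
    using x that by (simp add: prufer_vecs_def prufer_carrier_iff)
  moreover have "x k / of_nat p \<le> x k" if "0 \<le> x k" for k
    using p_pos that by (simp add: divide_le_eq mult_le_cancel_left1)
  ultimately have y: "y \<in> prufer_vecs p n"
    using x p_pos by (fastforce simp: y_def prufer_vecs_def prufer_carrier_iff intro: p_fraction_divide)
  have "frac_vec n (\<lambda>j. of_nat p * y j) = x"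
    using x p_pos by (simp add: y_def frac_vec_id)
  then have "\<phi> (x, \<lambda>_. 0) = \<phi> ((y, \<lambda>_. 0) [^]\<^bsub>G\<^esub> p)"
    by (simp add: pow_bottom)
  also have "\<dots> = \<phi> (y, \<lambda>_. 0) [^]\<^bsub>H\<^esub> p"
    by (rule hom_nat_pow[OF hom bottom_in_carrier[OF y] groups])
  finally have "\<phi> (x, \<lambda>_. 0) = \<phi> (y, \<lambda>_. 0) [^]\<^bsub>H\<^esub> p" .
  moreover obtain a b where ab: "\<phi> (y, \<lambda>_. 0) = (a, b)" by fastforce
  moreover have "(a, b) \<in> carrier H"
    using hom_in_carrier[OF hom bottom_in_carrier[OF y]] ab by simp
  ultimately show ?thesis
    by (simp add: snd_pow mod_vec_def fun_eq_iff)
qed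

lemma snd_hom:
  assumes "x \<in> prufer_vecs p n" "v \<in> residue_vecs p m"
  shows "snd (\<phi> (x, v)) = top_map \<phi> v"
proof -
  obtain a where a: "\<phi> (x, \<lambda>_. 0) = (a, \<lambda>_. 0)"
    using hom_bottom[OF assms(1)] by (metis prod.collapse)
  obtain s t where st: "\<phi> ((\<lambda>_. 0), v) = (s, t)" by fastforce
  have t: "t \<in> residue_vecs p m"
    using hom_in_carrier[OF hom top_in_carrier[OF assms(2)]] st by (simp add: carrier_chernikov_group)
  have "\<phi> (x, v) = \<phi> (x, \<lambda>_. 0) \<otimes>\<^bsub>H\<^esub> \<phi> ((\<lambda>_. 0), v)"
    using hom_mult[OF hom bottom_in_carrier[OF assms(1)] top_in_carrier[OF assms(2)]]
      mult_bottom_top[OF assms] by simp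
  then show ?thesis
    using a st t by (simp add: top_map_def mult_chernikov_group mod_vec_id)
qed

lemma top_map_in_residue_vecs: "v \<in> residue_vecs p m \<Longrightarrow> top_map \<phi> v \<in> residue_vecs p m"
  using hom_in_carrier[OF hom top_in_carrier] by (auto simp: top_map_def carrier_chernikov_group mem_Times_iff)

lemma top_map_add:
  assumes v: "v \<in> residue_vecs p m" and w: "w \<in> residue_vecs p m"
  shows "top_map \<phi> (mod_vec p m (\<lambda>i. v i + w i)) = mod_vec p m (\<lambda>i. top_map \<phi> v i + top_map \<phi> w i)"
proof -
  obtain z vw where prod: "((\<lambda>_. 0), v) \<otimes>\<^bsub>G\<^esub> ((\<lambda>_. 0), w) = (z, vw)" by fastforce
  have "vw = mod_vec p m (\<lambda>i. v i + w i)"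
    using prod by (simp add: mult_chernikov_group)
  moreover have "(z, vw) \<in> carrier G"
    unfolding prod[symmetric] using top_in_carrier v w groups(1)
    by (simp add: group.is_monoid monoid.m_closed)
  ultimately have "top_map \<phi> (mod_vec p m (\<lambda>i. v i + w i)) = snd (\<phi> (z, vw))"
    using snd_hom by (simp add: carrier_chernikov_group)
  also have "\<dots> = snd (\<phi> ((\<lambda>_. 0), v) \<otimes>\<^bsub>H\<^esub> \<phi> ((\<lambda>_. 0), w))"
    using hom_mult[OF hom top_in_carrier[OF v] top_in_carrier[OF w]] prod by simp
  also have "\<dots> = mod_vec p m (\<lambda>i. top_map \<phi> v i + top_map \<phi> w i)"
    by (cases "\<phi> ((\<lambda>_. 0), v)"; cases "\<phi> ((\<lambda>_. 0), w)") (simp add: top_map_def mult_chernikov_group)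
  finally show ?thesis .
qed

lemma hom_socle:
  assumes u: "u \<in> residue_vecs p n"
  shows "socle_map p n \<phi> u \<in> residue_vecs p n"
    and "\<phi> (socle_vec p u, \<lambda>_. 0) = (socle_vec p (socle_map p n \<phi> u), \<lambda>_. 0)"
proof -
  have x: "socle_vec p u \<in> prufer_vecs p n" by (rule socle_vec_in_prufer_vecs[OF p_pos u])
  obtain a where a: "\<phi> (socle_vec p u, \<lambda>_. 0) = (a, \<lambda>_. 0)"
    using hom_bottom[OF x] by (metis prod.collapse)
  have a_mem: "a \<in> prufer_vecs p n"
    using hom_in_carrier[OF hom bottom_in_carrier[OF x]] a by (simp add: carrier_chernikov_group)
  have "(socle_vec p u, \<lambda>_. 0) [^]\<^bsub>G\<^esub> p = \<one>\<^bsub>G\<^esub>"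
    using socle_iff_pow_eq_one[OF p_pos x] u by blast
  then have "(a, \<lambda>_. 0) [^]\<^bsub>H\<^esub> p = \<one>\<^bsub>H\<^esub>"
    using hom_nat_pow[OF hom bottom_in_carrier[OF x] groups, of p] hom_one[OF hom groups] a by simp
  then obtain u' where "u' \<in> residue_vecs p n" "a = socle_vec p u'"
    using socle_iff_pow_eq_one[OF p_pos a_mem] by blast
  then have "\<exists>u'. u' \<in> residue_vecs p n \<and> \<phi> (socle_vec p u, \<lambda>_. 0) = (socle_vec p u', \<lambda>_. 0)"
    using a by blast
  then have "socle_map p n \<phi> u \<in> residue_vecs p n
      \<and> \<phi> (socle_vec p u, \<lambda>_. 0) = (socle_vec p (socle_map p n \<phi> u), \<lambda>_. 0)"
    unfolding socle_map_def by (rule someI_ex)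
  then show "socle_map p n \<phi> u \<in> residue_vecs p n"
    and "\<phi> (socle_vec p u, \<lambda>_. 0) = (socle_vec p (socle_map p n \<phi> u), \<lambda>_. 0)"
    by blast+
qed

lemma socle_map_add:
  assumes u: "u \<in> residue_vecs p n" and u': "u' \<in> residue_vecs p n"
  shows "socle_map p n \<phi> (mod_vec p n (\<lambda>k. u k + u' k))
    = mod_vec p n (\<lambda>k. socle_map p n \<phi> u k + socle_map p n \<phi> u' k)"
proof -
  have uu': "mod_vec p n (\<lambda>k. u k + u' k) \<in> residue_vecs p n"
    by (rule mod_vec_in_residue_vecs[OF p_pos])
  have "(socle_vec p (socle_map p n \<phi> (mod_vec p n (\<lambda>k. u k + u' k))), \<lambda>_. 0)
      = \<phi> ((socle_vec p u, \<lambda>_. 0) \<otimes>\<^bsub>G\<^esub> (socle_vec p u', \<lambda>_. 0))"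
    using hom_socle(2)[OF uu'] mult_socle_vec[OF p_pos] by simp
  also have "\<dots> = \<phi> (socle_vec p u, \<lambda>_. 0) \<otimes>\<^bsub>H\<^esub> \<phi> (socle_vec p u', \<lambda>_. 0)"
    using hom_mult[OF hom] bottom_in_carrier socle_vec_in_prufer_vecs[OF p_pos] u u' by simp
  also have "\<dots> = (socle_vec p (mod_vec p n (\<lambda>k. socle_map p n \<phi> u k + socle_map p n \<phi> u' k)), \<lambda>_. 0)"
    using hom_socle(2)[OF u] hom_socle(2)[OF u'] mult_socle_vec[OF p_pos] by simp
  finally show ?thesis using socle_vec_eq_iff[OF p_pos] by simp
qed

lemma socle_map_commutator:
  assumes v: "v \<in> residue_vecs p m" and w: "w \<in> residue_vecs p m"
  shows "socle_map p n \<phi> (commutator_vec p n m A v w)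
    = commutator_vec p n m B (top_map \<phi> v) (top_map \<phi> w)"
proof -
  let ?g = "((\<lambda>_. 0), v)" and ?h = "((\<lambda>_. 0), w)"
  let ?c = "commutator_vec p n m A v w" and ?c' = "commutator_vec p n m B (top_map \<phi> v) (top_map \<phi> w)"
  have g: "?g \<in> carrier G" and h: "?h \<in> carrier G"
    using top_in_carrier v w by blast+
  have c: "?c \<in> residue_vecs p n"
    unfolding commutator_vec_def by (rule mod_vec_in_residue_vecs[OF p_pos])
  have hg: "?h \<otimes>\<^bsub>G\<^esub> ?g \<in> carrier G" and hg': "\<phi> ?h \<otimes>\<^bsub>H\<^esub> \<phi> ?g \<in> carrier H"
    using g h hom_in_carrier[OF hom] groups by (simp_all add: group.is_monoid monoid.m_closed)
  have "\<phi> ?g \<otimes>\<^bsub>H\<^esub> \<phi> ?h = \<phi> ((socle_vec p ?c, \<lambda>_. 0) \<otimes>\<^bsub>G\<^esub> (?h \<otimes>\<^bsub>G\<^esub> ?g))"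
    using hom_mult[OF hom g h] commutator_identity[where x = "\<lambda>_. 0" and v = v and y = "\<lambda>_. 0" and w = w]
    by simp
  also have "\<dots> = (socle_vec p (socle_map p n \<phi> ?c), \<lambda>_. 0) \<otimes>\<^bsub>H\<^esub> (\<phi> ?h \<otimes>\<^bsub>H\<^esub> \<phi> ?g)"
    using hom_mult[OF hom bottom_in_carrier[OF socle_vec_in_prufer_vecs[OF p_pos c]] hg]
      hom_mult[OF hom h g] hom_socle(2)[OF c] by simp
  finally have "(socle_vec p (socle_map p n \<phi> ?c), \<lambda>_. 0) \<otimes>\<^bsub>H\<^esub> (\<phi> ?h \<otimes>\<^bsub>H\<^esub> \<phi> ?g)
      = (socle_vec p ?c', \<lambda>_. 0) \<otimes>\<^bsub>H\<^esub> (\<phi> ?h \<otimes>\<^bsub>H\<^esub> \<phi> ?g)"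
    using commutator_identity[where x = "fst (\<phi> ?g)" and v = "top_map \<phi> v" and A = B
        and y = "fst (\<phi> ?h)" and w = "top_map \<phi> w"]
      hom_in_carrier[OF hom g] hom_in_carrier[OF hom h] by (simp add: top_map_def)
  then have "(socle_vec p (socle_map p n \<phi> ?c), \<lambda>_. 0) = (socle_vec p ?c', (\<lambda>_. 0) :: nat \<Rightarrow> int)"
    using group.right_cancel[OF groups(2) hg'] hom_socle(1)[OF c] p_pos
    by (simp add: bottom_in_carrier socle_vec_in_prufer_vecs commutator_vec_def mod_vec_in_residue_vecs)
  then show ?thesis using socle_vec_eq_iff[OF p_pos] by simp
qed

end

lemma top_map_inverse:
  assumes "chernikov_hom p n m A B \<phi>" "chernikov_hom p n m B A \<psi>"
    and "\<And>g. g \<in> carrier (chernikov_group p n m A) \<Longrightarrow> \<psi> (\<phi> g) = g"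
    and v: "v \<in> residue_vecs p m"
  shows "top_map \<psi> (top_map \<phi> v) = v"
proof -
  interpret \<phi>: chernikov_hom p n m A B \<phi> by fact
  interpret \<psi>: chernikov_hom p n m B A \<psi> by fact
  obtain s where s: "\<phi> ((\<lambda>_. 0), v) = (s, top_map \<phi> v)" by (metis top_map_def prod.collapse)
  then have "s \<in> prufer_vecs p n"
    using hom_in_carrier[OF \<phi>.hom \<phi>.top_in_carrier[OF v]] by (simp add: carrier_chernikov_group)
  then have "top_map \<psi> (top_map \<phi> v) = snd (\<psi> (\<phi> ((\<lambda>_. 0), v)))"
    using s \<psi>.snd_hom \<phi>.top_map_in_residue_vecs[OF v] by simp
  also have "\<dots> = v" using assms(3) \<phi>.top_in_carrier[OF v] by simp
  finally show ?thesis .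
qed

lemma socle_map_inverse:
  assumes "chernikov_hom p n m A B \<phi>" "chernikov_hom p n m B A \<psi>"
    and "\<And>g. g \<in> carrier (chernikov_group p n m A) \<Longrightarrow> \<psi> (\<phi> g) = g"
    and u: "u \<in> residue_vecs p n"
  shows "socle_map p n \<psi> (socle_map p n \<phi> u) = u"
proof -
  interpret \<phi>: chernikov_hom p n m A B \<phi> by fact
  interpret \<psi>: chernikov_hom p n m B A \<psi> by fact
  have "(socle_vec p (socle_map p n \<psi> (socle_map p n \<phi> u)), \<lambda>_. 0) = \<psi> (\<phi> (socle_vec p u, \<lambda>_. 0))"
    using \<phi>.hom_socle[OF u] \<psi>.hom_socle(2)[OF \<phi>.hom_socle(1)[OF u]] by simp
  also have "\<dots> = (socle_vec p u, \<lambda>_. 0)"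
    using assms(3) \<phi>.bottom_in_carrier socle_vec_in_prufer_vecs[OF \<phi>.p_pos u] by simp
  finally show ?thesis using socle_vec_eq_iff[OF \<phi>.p_pos] by simp
qed

section \<open>Additive maps of \<open>\<bbbF>\<^sub>p\<^sup>d\<close> are given by matrices\<close>

definition unit_vec :: "nat \<Rightarrow> nat \<Rightarrow> int" where
  "unit_vec c = (\<lambda>i. if i = c then 1 else 0)"

definition additive_mod :: "nat \<Rightarrow> nat \<Rightarrow> ((nat \<Rightarrow> int) \<Rightarrow> nat \<Rightarrow> int) \<Rightarrow> bool" where
  "additive_mod p d f \<longleftrightarrow> (\<forall>v\<in>residue_vecs p d. f v \<in> residue_vecs p d) \<and>
     (\<forall>v\<in>residue_vecs p d. \<forall>w\<in>residue_vecs p d.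
        f (mod_vec p d (\<lambda>i. v i + w i)) = mod_vec p d (\<lambda>i. f v i + f w i))"

lemma unit_vec_in_residue_vecs: "p > 1 \<Longrightarrow> c < d \<Longrightarrow> unit_vec c \<in> residue_vecs p d"
  by (auto simp: unit_vec_def residue_vecs_def)

lemma sum_unit_vec_right:
  assumes "i < m"
  shows "(\<Sum>b<m. f b * unit_vec i b) = f i"
proof -
  have "(\<Sum>b<m. f b * unit_vec i b) = (\<Sum>b<m. if b = i then f b else 0)"
    by (rule sum.cong) (simp_all add: unit_vec_def)
  also have "\<dots> = f i" using assms by simp
  finally show ?thesis .
qed

lemma sum_unit_vec_left: "i < m \<Longrightarrow> (\<Sum>b<m. unit_vec i b * f b) = f i"
  using sum_unit_vec_right[of i m f] by (simp add: mult.commute)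

lemma additive_mod_zero:
  assumes "p > 0" "additive_mod p d f"
  shows "f (\<lambda>_. 0) = (\<lambda>_. 0)"
proof -
  let ?z = "f (\<lambda>_. 0)"
  have zero: "(\<lambda>_. 0) \<in> residue_vecs p d" using assms(1) by (simp add: residue_vecs_def)
  have z: "?z \<in> residue_vecs p d" and add: "\<forall>v\<in>residue_vecs p d. \<forall>w\<in>residue_vecs p d.
      f (mod_vec p d (\<lambda>i. v i + w i)) = mod_vec p d (\<lambda>i. f v i + f w i)"
    using assms(2) zero unfolding additive_mod_def by blast+
  have zz: "?z = mod_vec p d (\<lambda>i. ?z i + ?z i)"
    using add[rule_format, OF zero zero] by simp
  have "[?z i + ?z i = ?z i] (mod int p)" if "i < d" for i
  proof -
    have "[mod_vec p d (\<lambda>i. ?z i + ?z i) i = ?z i + ?z i] (mod int p)"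
      by (rule cong_mod_vec[OF that])
    then show ?thesis by (subst (asm) zz[symmetric]) (rule cong_sym)
  qed
  then show ?thesis
    by (intro residue_vecs_eqI[OF z zero]) (metis cong_add_rcancel_0)
qed

lemma additive_mod_scale:
  assumes "p > 0" "additive_mod p d f" "v \<in> residue_vecs p d"
  shows "f (mod_vec p d (\<lambda>i. int k * v i)) = mod_vec p d (\<lambda>i. int k * f v i)"
proof (induction k)
  case 0
  then show ?case using additive_mod_zero[OF assms(1,2)] by simp
next
  case (Suc k)
  have step: "mod_vec p d (\<lambda>i. int (Suc k) * u i) = mod_vec p d (\<lambda>i. mod_vec p d (\<lambda>i. int k * u i) i + u i)"
    for u
    by (simp add: mod_vec_mod_vec_add algebra_simps)
  have "f v \<in> residue_vecs p d" using assms unfolding additive_mod_def by blast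
  then show ?case
    using assms Suc mod_vec_in_residue_vecs[OF assms(1)] unfolding step additive_mod_def by simp
qed

lemma additive_mod_expansion:
  assumes "p > 1" "additive_mod p d f" "v \<in> residue_vecs p d" "a < d"
  shows "[f v a = (\<Sum>c<d. v c * f (unit_vec c) a)] (mod int p)"
proof -
  have p: "p > 0" using assms(1) by simp
  define trunc where "trunc t = (\<lambda>i. if i < t then v i else 0)" for t
  have trunc_mem: "trunc t \<in> residue_vecs p d" for t
    using assms(3) by (auto simp: trunc_def residue_vecs_def)
  have "[f (trunc t) a = (\<Sum>c<t. v c * f (unit_vec c) a)] (mod int p)" if "t \<le> d" for t
    using that
  proof (induction t)
    case 0
    then show ?case using additive_mod_zero[OF p assms(2)] by (simp add: trunc_def)
  next
    case (Suc t)
    have vt: "0 \<le> v t" using assms(3) Suc.prems by (simp add: residue_vecs_def)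
    have e: "unit_vec t \<in> residue_vecs p d" using unit_vec_in_residue_vecs assms(1) Suc.prems by simp
    have "trunc (Suc t) = mod_vec p d (\<lambda>i. trunc t i + mod_vec p d (\<lambda>i. int (nat (v t)) * unit_vec t i) i)"
      using assms(3) vt Suc.prems
      by (auto simp: mod_vec_mod_vec_add trunc_def unit_vec_def residue_vecs_def mod_vec_def
          fun_eq_iff less_Suc_eq)
    then have "f (trunc (Suc t)) = mod_vec p d (\<lambda>i. f (trunc t) i + mod_vec p d (\<lambda>i. v t * f (unit_vec t) i) i)"
      using assms(2) trunc_mem mod_vec_in_residue_vecs[OF p] additive_mod_scale[OF p assms(2) e, of "nat (v t)"] vt
      unfolding additive_mod_def by simp
    then have "[f (trunc (Suc t)) a = f (trunc t) a + v t * f (unit_vec t) a] (mod int p)"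
      by (simp add: mod_vec_mod_vec_add) (rule cong_mod_vec[OF assms(4)])
    also have "[f (trunc t) a + v t * f (unit_vec t) a = (\<Sum>c<Suc t. v c * f (unit_vec c) a)] (mod int p)"
      using Suc by (simp add: cong_add)
    finally show ?case .
  qed
  moreover have "trunc d = v" using assms(3) by (auto simp: trunc_def residue_vecs_def)
  ultimately show ?thesis by blast
qed

lemma additive_mod_invertible:
  assumes "p > 1" "additive_mod p d f" "additive_mod p d g"
    and gf: "\<And>v. v \<in> residue_vecs p d \<Longrightarrow> g (f v) = v"
    and fg: "\<And>v. v \<in> residue_vecs p d \<Longrightarrow> f (g v) = v"
  shows "invertible_mod p d (\<lambda>c a. f (unit_vec c) a)"
  unfolding invertible_mod_def
proof (intro exI[of _ "\<lambda>c a. g (unit_vec c) a"] allI impI conjI)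
  fix i j assume i: "i < d" and j: "j < d"
  have e: "unit_vec i \<in> residue_vecs p d" using unit_vec_in_residue_vecs[OF assms(1) i] .
  have "f (unit_vec i) \<in> residue_vecs p d" "g (unit_vec i) \<in> residue_vecs p d"
    using e assms(2,3) unfolding additive_mod_def by blast+
  then have "[g (f (unit_vec i)) j = (\<Sum>l<d. f (unit_vec i) l * g (unit_vec l) j)] (mod int p)"
    and "[f (g (unit_vec i)) j = (\<Sum>l<d. g (unit_vec i) l * f (unit_vec l) j)] (mod int p)"
    using additive_mod_expansion[OF assms(1,3) _ j] additive_mod_expansion[OF assms(1,2) _ j] by blast+
  then show "[(\<Sum>l<d. f (unit_vec i) l * g (unit_vec l) j) = (if i = j then 1 else 0)] (mod int p)"
    and "[(\<Sum>l<d. g (unit_vec i) l * f (unit_vec l) j) = (if i = j then 1 else 0)] (mod int p)"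
    using gf[OF e] fg[OF e] by (simp_all add: unit_vec_def cong_sym eq_commute[of j i])
qed

definition upper_form :: "nat \<Rightarrow> (nat \<Rightarrow> nat \<Rightarrow> int) \<Rightarrow> (nat \<Rightarrow> int) \<Rightarrow> (nat \<Rightarrow> int) \<Rightarrow> int" where
  "upper_form m T v w = (\<Sum>j<m. \<Sum>i<j. v i * w j * T i j)"

definition bilinear_form :: "nat \<Rightarrow> (nat \<Rightarrow> nat \<Rightarrow> int) \<Rightarrow> (nat \<Rightarrow> int) \<Rightarrow> (nat \<Rightarrow> int) \<Rightarrow> int" where
  "bilinear_form m T v w = (\<Sum>a<m. \<Sum>b<m. v a * T a b * w b)"

lemma cocycle_upper_form: "cocycle m A k v w = upper_form m (A k) v w"
  by (simp add: cocycle_def upper_form_def)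

lemma bilinear_form_unit_vec: "a < m \<Longrightarrow> b < m \<Longrightarrow> bilinear_form m T (unit_vec a) (unit_vec b) = T a b"
  by (simp add: bilinear_form_def sum_unit_vec_left sum_unit_vec_right)

lemma skew_symmetric_mod_diag:
  assumes "skew_symmetric_mod p m T" "i < m"
  shows "[T i i = 0] (mod int p)"
proof -
  have "[bilinear_form m T (unit_vec i) (unit_vec i) = 0] (mod int p)"
    using assms(1) by (simp add: skew_symmetric_mod_def bilinear_form_def)
  then show ?thesis using bilinear_form_unit_vec[OF assms(2,2)] by simp
qed

lemma skew_symmetric_mod_antisym:
  assumes "skew_symmetric_mod p m T" "i < m" "j < m"
  shows "[T i j + T j i = 0] (mod int p)"
proof -
  let ?x = "\<lambda>a. unit_vec i a + unit_vec j a"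
  have "bilinear_form m T ?x ?x = T i i + T i j + (T j i + T j j)"
    using assms(2,3) by (simp add: bilinear_form_def distrib_left distrib_right sum.distrib
        sum_unit_vec_left sum_unit_vec_right)
  moreover have "[bilinear_form m T ?x ?x = 0] (mod int p)"
    using assms(1) by (simp add: skew_symmetric_mod_def bilinear_form_def)
  ultimately have "[T i i + T i j + (T j i + T j j) = 0] (mod int p)" by simp
  moreover have "[T i i + T j j = 0 + 0] (mod int p)"
    using skew_symmetric_mod_diag[OF assms(1)] assms(2,3) by (intro cong_add)
  ultimately have "[(T i i + T i j + (T j i + T j j)) - (T i i + T j j) = 0 - (0 + 0)] (mod int p)"
    by (intro cong_diff) simp_all
  then show ?thesis by (simp add: algebra_simps)
qed

lemma skew_symmetric_mod_upper_form:
  assumes "skew_symmetric_mod p m T"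
  shows "[upper_form m T v w - upper_form m T w v = bilinear_form m T v w] (mod int p)"
proof -
  have "[upper_form t T v w - upper_form t T w v = bilinear_form t T v w] (mod int p)" if "t \<le> m" for t
    using that
  proof (induction t)
    case 0
    then show ?case by (simp add: upper_form_def bilinear_form_def)
  next
    case (Suc t)
    have t: "t < m" using Suc.prems by simp
    let ?R = "\<Sum>i<t. v t * T t i * w i" and ?S1 = "\<Sum>i<t. v i * T i t * w t"
      and ?S2 = "\<Sum>i<t. w i * v t * T i t" and ?D = "v t * T t t * w t"
    have "[(\<Sum>i<t. v t * T t i * w i + w i * v t * T i t) = (\<Sum>i<t. 0)] (mod int p)"
    proof (rule cong_sum)
      fix i assume "i \<in> {..<t}"
      then have "[v t * w i * (T t i + T i t) = v t * w i * 0] (mod int p)"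
        using skew_symmetric_mod_antisym[OF assms t] t by (intro cong_scalar_left) simp
      then show "[v t * T t i * w i + w i * v t * T i t = 0] (mod int p)" by (simp add: algebra_simps)
    qed
    moreover have "[?D = v t * 0 * w t] (mod int p)"
      using skew_symmetric_mod_diag[OF assms t] by (intro cong_mult cong_refl)
    ultimately have "[(?R + ?S2) + ?D = 0 + 0] (mod int p)"
      by (intro cong_add) (simp_all add: sum.distrib)
    then have diag_part: "[?R + ?D = - ?S2] (mod int p)"
      by (simp add: cong_iff_dvd_diff algebra_simps)
    have bilinear_Suc: "bilinear_form (Suc t) T v w = bilinear_form t T v w + ?S1 + (?R + ?D)"
      by (simp add: bilinear_form_def sum.distrib add.assoc)
    have upper_Suc: "upper_form (Suc t) T v w - upper_form (Suc t) T w v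
        = (upper_form t T v w - upper_form t T w v) + ?S1 + - ?S2"
      by (simp add: upper_form_def algebra_simps)
    have "[(upper_form t T v w - upper_form t T w v) + ?S1 + - ?S2
        = bilinear_form t T v w + ?S1 + (?R + ?D)] (mod int p)"
      using Suc cong_sym[OF diag_part] by (intro cong_add cong_refl) simp_all
    then show ?case by (simp only: upper_Suc bilinear_Suc)
  qed
  then show ?thesis by blast
qed

lemma commutator_vec_cong:
  assumes "skew_tuple p n m A" "k < n"
  shows "[commutator_vec p n m A v w k = bilinear_form m (A k) v w] (mod int p)"
proof (rule cong_trans)
  show "[commutator_vec p n m A v w k = upper_form m (A k) v w - upper_form m (A k) w v] (mod int p)"
    unfolding commutator_vec_def cocycle_upper_form by (rule cong_mod_vec[OF assms(2)])
  show "[upper_form m (A k) v w - upper_form m (A k) w v = bilinear_form m (A k) v w] (mod int p)"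
    using assms by (intro skew_symmetric_mod_upper_form) (simp add: skew_tuple_def)
qed

section \<open>Isomorphic groups have weakly congruent tuples\<close>

lemma (in chernikov_hom) additive_mod_top_map: "additive_mod p m (top_map \<phi>)"
  using top_map_in_residue_vecs top_map_add by (simp add: additive_mod_def)

lemma (in chernikov_hom) additive_mod_socle_map: "additive_mod p n (socle_map p n \<phi>)"
  using hom_socle(1) socle_map_add by (simp add: additive_mod_def)

lemma commutator_relation_imp_weakly_congruent:
  assumes p: "p > 1" and A: "skew_tuple p n m A" and A': "skew_tuple p n m A'"
    and \<rho>: "additive_mod p m \<rho>" "additive_mod p m \<rho>'"
    and \<rho>_inv: "\<And>v. v \<in> residue_vecs p m \<Longrightarrow> \<rho>' (\<rho> v) = v" "\<And>v. v \<in> residue_vecs p m \<Longrightarrow> \<rho> (\<rho>' v) = v"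
    and \<sigma>: "additive_mod p n \<sigma>" "additive_mod p n \<sigma>'"
    and \<sigma>_inv: "\<And>u. u \<in> residue_vecs p n \<Longrightarrow> \<sigma>' (\<sigma> u) = u" "\<And>u. u \<in> residue_vecs p n \<Longrightarrow> \<sigma> (\<sigma>' u) = u"
    and comm: "\<And>v w. v \<in> residue_vecs p m \<Longrightarrow> w \<in> residue_vecs p m \<Longrightarrow>
      \<sigma> (commutator_vec p n m A (\<rho> v) (\<rho> w)) = commutator_vec p n m A' v w"
  shows "weakly_congruent p n m A A'"
proof -
  have key: "[A' j a b = (\<Sum>k<n. \<sigma> (unit_vec k) j
      * bilinear_form m (A k) (\<rho> (unit_vec a)) (\<rho> (unit_vec b)))] (mod int p)"
    if j: "j < n" and a: "a < m" and b: "b < m" for j a b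
  proof -
    let ?v = "\<rho> (unit_vec a)" and ?w = "\<rho> (unit_vec b)"
    let ?c = "commutator_vec p n m A ?v ?w"
    have e: "unit_vec a \<in> residue_vecs p m" "unit_vec b \<in> residue_vecs p m"
      using unit_vec_in_residue_vecs[OF p] a b by blast+
    have c: "?c \<in> residue_vecs p n"
      using p by (simp add: commutator_vec_def mod_vec_in_residue_vecs)
    have "[A' j a b = commutator_vec p n m A' (unit_vec a) (unit_vec b) j] (mod int p)"
      using cong_sym[OF commutator_vec_cong[OF A' j, of "unit_vec a" "unit_vec b"]]
      by (simp add: bilinear_form_unit_vec[OF a b])
    then have "[A' j a b = \<sigma> ?c j] (mod int p)"
      using comm[OF e] by simp
    also have "[\<sigma> ?c j = (\<Sum>k<n. ?c k * \<sigma> (unit_vec k) j)] (mod int p)"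
      by (rule additive_mod_expansion[OF p \<sigma>(1) c j])
    also have "[(\<Sum>k<n. ?c k * \<sigma> (unit_vec k) j)
        = (\<Sum>k<n. \<sigma> (unit_vec k) j * bilinear_form m (A k) ?v ?w)] (mod int p)"
    proof (rule cong_sum)
      fix k assume "k \<in> {..<n}"
      then have "[?c k = bilinear_form m (A k) ?v ?w] (mod int p)"
        by (intro commutator_vec_cong[OF A]) simp
      then show "[?c k * \<sigma> (unit_vec k) j = \<sigma> (unit_vec k) j * bilinear_form m (A k) ?v ?w] (mod int p)"
        by (metis cong_scalar_right mult.commute)
    qed
    finally show ?thesis .
  qed
  moreover have "invertible_mod p m (\<lambda>a c. \<rho> (unit_vec a) c)"
    by (rule additive_mod_invertible[OF p \<rho> \<rho>_inv])
  moreover have "invertible_mod p n (\<lambda>k j. \<sigma> (unit_vec k) j)"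
    by (rule additive_mod_invertible[OF p \<sigma> \<sigma>_inv])
  ultimately show ?thesis
    unfolding weakly_congruent_def bilinear_form_def by blast
qed

theorem iso_imp_weakly_congruent:
  assumes p1: "p > 1" and A: "skew_tuple p n m A" and A': "skew_tuple p n m A'"
    and "chernikov_group p n m A \<cong> chernikov_group p n m A'"
  shows "weakly_congruent p n m A A'"
proof -
  obtain \<phi> where iso: "\<phi> \<in> iso (chernikov_group p n m A) (chernikov_group p n m A')"
    using assms(4) unfolding is_iso_def by blast
  define \<psi> where "\<psi> = inv_into (carrier (chernikov_group p n m A)) \<phi>"
  have \<psi>_iso: "\<psi> \<in> iso (chernikov_group p n m A') (chernikov_group p n m A)"
    unfolding \<psi>_def using p1 by (intro group.iso_set_sym[OF group_chernikov_group iso]) simp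
  interpret \<phi>: chernikov_hom p n m A A' \<phi>
    using iso p1 by unfold_locales (simp_all add: iso_def)
  interpret \<psi>: chernikov_hom p n m A' A \<psi>
    using \<psi>_iso p1 by unfold_locales (simp_all add: iso_def)
  have \<psi>\<phi>: "\<And>g. g \<in> carrier (chernikov_group p n m A) \<Longrightarrow> \<psi> (\<phi> g) = g"
    using iso by (simp add: \<psi>_def iso_def bij_betw_def)
  have \<phi>\<psi>: "\<And>h. h \<in> carrier (chernikov_group p n m A') \<Longrightarrow> \<phi> (\<psi> h) = h"
    using iso bij_betw_inv_into_right by (fastforce simp: \<psi>_def iso_def)
  note top_inv = top_map_inverse[OF \<phi>.chernikov_hom_axioms \<psi>.chernikov_hom_axioms \<psi>\<phi>]
    top_map_inverse[OF \<psi>.chernikov_hom_axioms \<phi>.chernikov_hom_axioms \<phi>\<psi>]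
  note socle_inv = socle_map_inverse[OF \<phi>.chernikov_hom_axioms \<psi>.chernikov_hom_axioms \<psi>\<phi>]
    socle_map_inverse[OF \<psi>.chernikov_hom_axioms \<phi>.chernikov_hom_axioms \<phi>\<psi>]
  show ?thesis
  proof (rule commutator_relation_imp_weakly_congruent[OF p1 A A' \<psi>.additive_mod_top_map
        \<phi>.additive_mod_top_map top_inv(2,1) \<phi>.additive_mod_socle_map \<psi>.additive_mod_socle_map socle_inv])
    fix v w assume "v \<in> residue_vecs p m" "w \<in> residue_vecs p m"
    then show "socle_map p n \<phi> (commutator_vec p n m A (top_map \<psi> v) (top_map \<psi> w))
        = commutator_vec p n m A' v w"
      using \<phi>.socle_map_commutator \<psi>.top_map_in_residue_vecs top_inv(2) by simp
  qed
qed

section \<open>Changing the basis of the bottom\<close>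

definition comb_tuple ::
  "nat \<Rightarrow> (nat \<Rightarrow> nat \<Rightarrow> int) \<Rightarrow> (nat \<Rightarrow> nat \<Rightarrow> nat \<Rightarrow> int) \<Rightarrow> nat \<Rightarrow> nat \<Rightarrow> nat \<Rightarrow> int"
  where "comb_tuple n Q A = (\<lambda>j a b. \<Sum>i<n. Q i j * A i a b)"

definition lin_comb :: "nat \<Rightarrow> (nat \<Rightarrow> nat \<Rightarrow> int) \<Rightarrow> (nat \<Rightarrow> rat) \<Rightarrow> nat \<Rightarrow> rat" where
  "lin_comb n Q x = (\<lambda>j. \<Sum>i<n. of_int (Q i j) * x i)"

lemma cocycle_comb_tuple:
  "cocycle m (comb_tuple n Q A) j v w = (\<Sum>i<n. Q i j * cocycle m A i v w)"
proof -
  have "cocycle m (comb_tuple n Q A) j v w = (\<Sum>b<m. \<Sum>a<b. \<Sum>i<n. Q i j * (v a * w b * A i a b))"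
    unfolding cocycle_def comb_tuple_def by (simp add: sum_distrib_left mult_ac)
  also have "\<dots> = (\<Sum>i<n. \<Sum>b<m. \<Sum>a<b. Q i j * (v a * w b * A i a b))"
    by (simp only: sum.swap[of _ "{..<n}"])
  also have "\<dots> = (\<Sum>i<n. Q i j * cocycle m A i v w)"
    unfolding cocycle_def by (simp add: sum_distrib_left)
  finally show ?thesis .
qed

lemma p_fraction_common_exponent:
  fixes n :: nat
  shows "(\<And>i. i < n \<Longrightarrow> p_fraction p (z i)) \<Longrightarrow> \<exists>e. \<forall>i<n. z i * of_nat (p ^ e) \<in> \<int>"
proof (induction n)
  case 0
  then show ?case by simp
next
  case (Suc n)
  then obtain e where e: "\<forall>i<n. z i * of_nat (p ^ e) \<in> \<int>" by auto
  obtain f where f: "z n * of_nat (p ^ f) \<in> \<int>" using Suc.prems[of n] unfolding p_fraction_def by auto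
  have "z i * of_nat (p ^ (e + f)) \<in> \<int>" if "i < Suc n" for i
  proof (cases "i < n")
    case True
    then have "z i * of_nat (p ^ e) * of_nat (p ^ f) \<in> \<int>" using e by (simp add: Ints_mult)
    then show ?thesis by (simp add: power_add mult.assoc)
  next
    case False
    then have "i = n" using that by simp
    then have "z i * of_nat (p ^ f) * of_nat (p ^ e) \<in> \<int>" using f by (simp add: Ints_mult)
    then show ?thesis by (simp add: power_add mult_ac)
  qed
  then show ?case by blast
qed

lemma lin_comb_Ints: "(\<And>i. i < n \<Longrightarrow> x i \<in> \<int>) \<Longrightarrow> lin_comb n Q x j \<in> \<int>"
  unfolding lin_comb_def by (intro Ints_sum Ints_mult) auto

lemma lin_comb_diff_Ints:
  assumes "\<And>i. i < n \<Longrightarrow> x i - y i \<in> \<int>"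
  shows "lin_comb n Q x j - lin_comb n Q y j \<in> \<int>"
proof -
  have "lin_comb n Q x j - lin_comb n Q y j = lin_comb n Q (\<lambda>i. x i - y i) j"
    by (simp add: lin_comb_def sum_subtractf[symmetric] right_diff_distrib)
  then show ?thesis using lin_comb_Ints[of n "\<lambda>i. x i - y i"] assms by simp
qed

lemma p_fraction_lin_comb: "(\<And>i. i < n \<Longrightarrow> p_fraction p (x i)) \<Longrightarrow> p_fraction p (lin_comb n Q x j)"
  unfolding lin_comb_def by (intro p_fraction_sum p_fraction_mult_Ints) auto

lemma lin_comb_lin_comb:
  "lin_comb n Q' (lin_comb n Q x) l = lin_comb n (\<lambda>i l. \<Sum>j<n. Q i j * Q' j l) x l"
proof -
  have "lin_comb n Q' (lin_comb n Q x) l = (\<Sum>j<n. \<Sum>i<n. x i * (of_int (Q i j) * of_int (Q' j l)))"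
    unfolding lin_comb_def by (simp add: sum_distrib_left mult_ac)
  also have "\<dots> = (\<Sum>i<n. \<Sum>j<n. x i * (of_int (Q i j) * of_int (Q' j l)))"
    by (rule sum.swap)
  also have "\<dots> = lin_comb n (\<lambda>i l. \<Sum>j<n. Q i j * Q' j l) x l"
    unfolding lin_comb_def by (simp add: sum_distrib_left sum_distrib_right mult_ac)
  finally show ?thesis .
qed

lemma invertible_mod_exact:
  assumes "invertible_mod p n Q"
  obtains Q' N M where
    "\<forall>i<n. \<forall>l<n. (\<Sum>j<n. Q i j * Q' j l) = (if i = l then 1 else 0) + int p * N i l"
    "\<forall>i<n. \<forall>l<n. (\<Sum>j<n. Q' i j * Q j l) = (if i = l then 1 else 0) + int p * M i l"
proof -
  obtain Q' where Q': "\<forall>i<n. \<forall>l<n.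
      [(\<Sum>j<n. Q i j * Q' j l) = (if i = l then 1 else 0)] (mod int p) \<and>
      [(\<Sum>j<n. Q' i j * Q j l) = (if i = l then 1 else 0)] (mod int p)"
    using assms unfolding invertible_mod_def by blast
  have exact: "(if i = l then 1 else 0) + int p * ((X - (if i = l then 1 else 0)) div int p) = X"
    if "[X = (if i = l then 1 else 0)] (mod int p)" for X :: int and i l :: nat
    using that by (simp add: cong_iff_dvd_diff dvd_mult_div_cancel)
  show thesis
    by (rule that[of Q' "\<lambda>i l. ((\<Sum>j<n. Q i j * Q' j l) - (if i = l then 1 else 0)) div int p"
          "\<lambda>i l. ((\<Sum>j<n. Q' i j * Q j l) - (if i = l then 1 else 0)) div int p"])
      (simp_all add: Q' exact)
qed

lemma lin_comb_near_identity:
  assumes "\<forall>i<n. \<forall>l<n. C i l = (if i = l then 1 else 0) + int p * N i l" "l < n"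
  shows "lin_comb n C x l = x l + of_nat p * lin_comb n N x l"
proof -
  have "lin_comb n C x l = (\<Sum>i<n. (if i = l then x i else 0) + of_nat p * (of_int (N i l) * x i))"
    unfolding lin_comb_def using assms by (intro sum.cong) (auto simp: algebra_simps)
  then show ?thesis using assms(2) by (simp add: sum.distrib sum_distrib_left lin_comb_def)
qed

text \<open>
  \<open>Q\<close> is only invertible modulo \<open>p\<close>, \<open>Q Q' = I + p N\<close>. On vectors with \<open>p\<close>-power
  denominators \<open>I + p N\<close> is nevertheless bijective modulo integers, by induction on the exponent
  of the denominator, which \<open>p N\<close> lowers.
\<close>

lemma near_identity_descent:
  assumes C: "\<forall>i<n. \<forall>l<n. C i l = (if i = l then 1 else 0) + int p * N i l"
    and z: "\<And>i. i < n \<Longrightarrow> p_fraction p (z i)"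
    and Ints: "\<And>l. l < n \<Longrightarrow> lin_comb n C z l \<in> \<int>"
  shows "\<forall>i<n. z i \<in> \<int>"
proof -
  have step: "\<forall>l<n. z l * of_nat (p ^ e) \<in> \<int>" if e: "\<forall>i<n. z i * of_nat (p ^ Suc e) \<in> \<int>" for e
  proof (intro allI impI)
    fix l assume l: "l < n"
    have "z l * of_nat (p ^ e)
        = lin_comb n C z l * of_nat (p ^ e) - lin_comb n N (\<lambda>i. z i * of_nat (p ^ Suc e)) l"
      using lin_comb_near_identity[OF C l]
      by (simp add: lin_comb_def sum_distrib_left sum_distrib_right algebra_simps)
    also have "\<dots> \<in> \<int>"
    proof (rule Ints_diff)
      show "lin_comb n C z l * of_nat (p ^ e) \<in> \<int>"
        using Ints[OF l] by (simp add: Ints_mult)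
      show "lin_comb n N (\<lambda>i. z i * of_nat (p ^ Suc e)) l \<in> \<int>"
        using e by (intro lin_comb_Ints) simp
    qed
    finally show "z l * of_nat (p ^ e) \<in> \<int>" .
  qed
  have "\<forall>i<n. z i * of_nat (p ^ e) \<in> \<int> \<Longrightarrow> \<forall>i<n. z i \<in> \<int>" for e
    by (induction e) (use step in auto)
  then show ?thesis using p_fraction_common_exponent[where z = z, OF z] by blast
qed

lemma near_identity_lift:
  assumes C: "\<forall>i<n. \<forall>l<n. C i l = (if i = l then 1 else 0) + int p * N i l"
    and y: "\<And>i. i < n \<Longrightarrow> p_fraction p (y i)"
  shows "\<exists>t. (\<forall>i<n. p_fraction p (t i)) \<and> (\<forall>l<n. lin_comb n C t l - y l \<in> \<int>)"
proof -
  have "\<forall>i<n. y i * of_nat (p ^ e) \<in> \<int> \<Longrightarrow>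
      \<exists>t. (\<forall>i<n. p_fraction p (t i)) \<and> (\<forall>l<n. lin_comb n C t l - y l \<in> \<int>)" for e y
  proof (induction e arbitrary: y)
    case 0
    then show ?case
      by (intro exI[of _ "\<lambda>_. 0"]) (auto simp: lin_comb_def p_fraction_Ints)
  next
    case (Suc e)
    define y' where "y' l = of_nat p * lin_comb n N y l" for l
    have "y' l * of_nat (p ^ e) = lin_comb n N (\<lambda>i. y i * of_nat (p ^ Suc e)) l" for l
      by (simp add: y'_def lin_comb_def sum_distrib_left sum_distrib_right algebra_simps)
    then have "\<forall>l<n. y' l * of_nat (p ^ e) \<in> \<int>"
      using Suc.prems by (simp add: lin_comb_Ints)
    then obtain t' where t': "\<forall>i<n. p_fraction p (t' i)" "\<forall>l<n. lin_comb n C t' l - y' l \<in> \<int>"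
      using Suc.IH by blast
    have "p_fraction p (y i)" if "i < n" for i
      using Suc.prems that unfolding p_fraction_def by blast
    then have "\<forall>i<n. p_fraction p (y i - t' i)"
      using t'(1) by (simp add: p_fraction_diff)
    moreover have "lin_comb n C (\<lambda>i. y i - t' i) l - y l \<in> \<int>" if "l < n" for l
    proof -
      have "lin_comb n C (\<lambda>i. y i - t' i) l - y l = - (lin_comb n C t' l - y' l)"
        using lin_comb_near_identity[OF C that, of "\<lambda>i. y i - t' i"] lin_comb_near_identity[OF C that, of t']
        by (simp add: y'_def lin_comb_def sum_subtractf right_diff_distrib algebra_simps)
      then show ?thesis using t'(2) that by (simp only: Ints_minus)
    qed
    ultimately show ?case by (intro exI[of _ "\<lambda>i. y i - t' i"]) auto
  qed
  then show ?thesis using p_fraction_common_exponent[where z = y, OF y] by blast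
qed

lemma lin_comb_Ints_imp_Ints:
  assumes Q: "invertible_mod p n Q" and z: "\<And>i. i < n \<Longrightarrow> p_fraction p (z i)"
    and Ints: "\<And>j. j < n \<Longrightarrow> lin_comb n Q z j \<in> \<int>"
  shows "\<forall>i<n. z i \<in> \<int>"
proof -
  obtain Q' N where N: "\<forall>i<n. \<forall>l<n. (\<Sum>j<n. Q i j * Q' j l) = (if i = l then 1 else 0) + int p * N i l"
    using invertible_mod_exact[OF Q] by metis
  show ?thesis
  proof (rule near_identity_descent[OF N z])
    fix l
    show "lin_comb n (\<lambda>i l. \<Sum>j<n. Q i j * Q' j l) z l \<in> \<int>"
      using lin_comb_Ints[of n "lin_comb n Q z" Q' l] Ints by (simp add: lin_comb_lin_comb)
  qed
qed

lemma lin_comb_surj_mod_Ints: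
  assumes Q: "invertible_mod p n Q" and y: "\<And>i. i < n \<Longrightarrow> p_fraction p (y i)"
  shows "\<exists>x. (\<forall>i<n. p_fraction p (x i)) \<and> (\<forall>j<n. lin_comb n Q x j - y j \<in> \<int>)"
proof -
  obtain Q' M where M: "\<forall>i<n. \<forall>l<n. (\<Sum>j<n. Q' i j * Q j l) = (if i = l then 1 else 0) + int p * M i l"
    using invertible_mod_exact[OF Q] by metis
  obtain t where t: "\<forall>i<n. p_fraction p (t i)"
    "\<forall>l<n. lin_comb n (\<lambda>i l. \<Sum>j<n. Q' i j * Q j l) t l - y l \<in> \<int>"
    using near_identity_lift[where y = y, OF M y] by blast
  show ?thesis
    using t by (intro exI[of _ "lin_comb n Q' t"]) (simp add: p_fraction_lin_comb lin_comb_lin_comb)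
qed

definition bottom_change ::
  "nat \<Rightarrow> (nat \<Rightarrow> nat \<Rightarrow> int) \<Rightarrow> (nat \<Rightarrow> rat) \<times> (nat \<Rightarrow> int) \<Rightarrow> (nat \<Rightarrow> rat) \<times> (nat \<Rightarrow> int)"
  where "bottom_change n Q g = (frac_vec n (lin_comb n Q (fst g)), snd g)"

lemma bottom_change_hom:
  "bottom_change n Q \<in> hom (chernikov_group p n m A) (chernikov_group p n m (comb_tuple n Q A))"
proof (rule homI)
  let ?G = "chernikov_group p n m A" and ?H = "chernikov_group p n m (comb_tuple n Q A)"
  show "bottom_change n Q g \<in> carrier ?H" if "g \<in> carrier ?G" for g
    using that by (auto simp: bottom_change_def carrier_chernikov_group prufer_vecs_p_fraction
        intro!: frac_vec_in_prufer_vecs p_fraction_lin_comb)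
  fix g h :: "(nat \<Rightarrow> rat) \<times> (nat \<Rightarrow> int)"
  obtain x v y w where gh: "g = (x, v)" "h = (y, w)" by fastforce
  let ?z = "\<lambda>k. x k + y k + of_int (cocycle m A k v w) / of_nat p"
  let ?c = "\<lambda>j. of_int (cocycle m (comb_tuple n Q A) j v w) / (of_nat p :: rat)"
  have "frac_vec n (lin_comb n Q (frac_vec n ?z))
      = frac_vec n (\<lambda>j. frac_vec n (lin_comb n Q x) j + frac_vec n (lin_comb n Q y) j + ?c j)"
    unfolding frac_vec_eq_iff
  proof (intro allI impI)
    fix j assume j: "j < n"
    have "lin_comb n Q ?z j = lin_comb n Q x j + lin_comb n Q y j + ?c j"
      by (simp add: lin_comb_def cocycle_comb_tuple sum.distrib distrib_left sum_divide_distrib)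
    then have "lin_comb n Q (frac_vec n ?z) j
          - (frac_vec n (lin_comb n Q x) j + frac_vec n (lin_comb n Q y) j + ?c j)
        = (lin_comb n Q (frac_vec n ?z) j - lin_comb n Q ?z j)
          - (frac_vec n (lin_comb n Q x) j - lin_comb n Q x j)
          - (frac_vec n (lin_comb n Q y) j - lin_comb n Q y j)"
      by simp
    also have "\<dots> \<in> \<int>"
      using j by (intro Ints_diff lin_comb_diff_Ints frac_vec_diff_Ints)
    finally show "lin_comb n Q (frac_vec n ?z) j
        - (frac_vec n (lin_comb n Q x) j + frac_vec n (lin_comb n Q y) j + ?c j) \<in> \<int>" .
  qed
  then show "bottom_change n Q (g \<otimes>\<^bsub>?G\<^esub> h) = bottom_change n Q g \<otimes>\<^bsub>?H\<^esub> bottom_change n Q h"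
    by (simp add: gh bottom_change_def mult_chernikov_group)
qed

lemma bottom_change_inj:
  assumes Q: "invertible_mod p n Q"
  shows "inj_on (bottom_change n Q) (carrier (chernikov_group p n m A))"
proof (rule inj_onI)
  fix g h assume g: "g \<in> carrier (chernikov_group p n m A)" and h: "h \<in> carrier (chernikov_group p n m A)"
    and eq: "bottom_change n Q g = bottom_change n Q h"
  obtain x v y w where gh: "g = (x, v)" "h = (y, w)" by fastforce
  have x: "x \<in> prufer_vecs p n" and y: "y \<in> prufer_vecs p n"
    using g h gh by (simp_all add: carrier_chernikov_group)
  have "\<forall>j<n. lin_comb n Q x j - lin_comb n Q y j \<in> \<int>"
    using eq by (simp add: gh bottom_change_def frac_vec_eq_iff)
  then have "\<forall>j<n. lin_comb n Q (\<lambda>i. x i - y i) j \<in> \<int>"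
    by (simp add: lin_comb_def sum_subtractf[symmetric] right_diff_distrib)
  then have "\<forall>i<n. x i - y i \<in> \<int>"
    using x y by (intro lin_comb_Ints_imp_Ints[OF Q]) (auto intro: p_fraction_diff prufer_vecs_p_fraction)
  then have "x = y" by (intro prufer_vecs_eqI[OF x y]) simp
  then show "g = h" using eq by (simp add: gh bottom_change_def)
qed

lemma bottom_change_surj:
  assumes Q: "invertible_mod p n Q"
  shows "carrier (chernikov_group p n m (comb_tuple n Q A))
    \<subseteq> bottom_change n Q ` carrier (chernikov_group p n m A)"
proof
  fix h assume h: "h \<in> carrier (chernikov_group p n m (comb_tuple n Q A))"
  obtain y w where hyw: "h = (y, w)" by fastforce
  have y: "y \<in> prufer_vecs p n" and w: "w \<in> residue_vecs p m"
    using h hyw by (simp_all add: carrier_chernikov_group)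
  obtain x where x: "\<forall>i<n. p_fraction p (x i)" "\<forall>j<n. lin_comb n Q x j - y j \<in> \<int>"
    using lin_comb_surj_mod_Ints[OF Q] y prufer_vecs_p_fraction by blast
  have "lin_comb n Q (frac_vec n x) j - y j \<in> \<int>" if "j < n" for j
  proof -
    have "lin_comb n Q (frac_vec n x) j - y j
        = (lin_comb n Q (frac_vec n x) j - lin_comb n Q x j) + (lin_comb n Q x j - y j)"
      by simp
    also have "\<dots> \<in> \<int>" using x that by (intro Ints_add lin_comb_diff_Ints frac_vec_diff_Ints) auto
    finally show ?thesis .
  qed
  then have "bottom_change n Q (frac_vec n x, w) = h"
    by (simp add: bottom_change_def hyw frac_vec_eqI[OF y])
  moreover have "(frac_vec n x, w) \<in> carrier (chernikov_group p n m A)"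
    using x w by (simp add: carrier_chernikov_group frac_vec_in_prufer_vecs)
  ultimately show "h \<in> bottom_change n Q ` carrier (chernikov_group p n m A)" by force
qed

lemma bottom_change_iso:
  assumes "invertible_mod p n Q"
  shows "chernikov_group p n m A \<cong> chernikov_group p n m (comb_tuple n Q A)"
proof -
  let ?G = "chernikov_group p n m A" and ?H = "chernikov_group p n m (comb_tuple n Q A)"
  have "bottom_change n Q ` carrier ?G \<subseteq> carrier ?H"
    using hom_in_carrier[OF bottom_change_hom] by blast
  then have "bij_betw (bottom_change n Q) (carrier ?G) (carrier ?H)"
    using bottom_change_inj[OF assms, where m = m and A = A] bottom_change_surj[OF assms, where m = m and A = A]
    by (auto simp: bij_betw_def)
  then show ?thesis
    using bottom_change_hom unfolding is_iso_def iso_def by blast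
qed

section \<open>A quadratic refinement of a symmetric form\<close>

definition diag_form :: "nat \<Rightarrow> (nat \<Rightarrow> nat \<Rightarrow> int) \<Rightarrow> (nat \<Rightarrow> int) \<Rightarrow> int" where
  "diag_form m S x = (\<Sum>a<m. S a a * x a)"

definition quad_refinement :: "nat \<Rightarrow> nat \<Rightarrow> (nat \<Rightarrow> nat \<Rightarrow> int) \<Rightarrow> (nat \<Rightarrow> int) \<Rightarrow> int" where
  "quad_refinement p m S x = bilinear_form m S x x + (int p - 2) * diag_form m S x"

lemma bilinear_form_add_left:
  "bilinear_form m S (\<lambda>a. x a + y a) z = bilinear_form m S x z + bilinear_form m S y z"
  by (simp add: bilinear_form_def distrib_right sum.distrib)

lemma bilinear_form_add_right:
  "bilinear_form m S z (\<lambda>a. x a + y a) = bilinear_form m S z x + bilinear_form m S z y"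
  by (simp add: bilinear_form_def distrib_left sum.distrib)

lemma bilinear_form_smult_left: "bilinear_form m S (\<lambda>a. c * x a) z = c * bilinear_form m S x z"
  by (simp add: bilinear_form_def sum_distrib_left mult_ac)

lemma bilinear_form_smult_right: "bilinear_form m S z (\<lambda>a. c * x a) = c * bilinear_form m S z x"
  by (simp add: bilinear_form_def sum_distrib_left mult_ac)

lemma bilinear_form_sym:
  assumes "\<forall>a b. S a b = S b a"
  shows "bilinear_form m S x y = bilinear_form m S y x"
proof -
  have "bilinear_form m S x y = (\<Sum>b<m. \<Sum>a<m. x a * S a b * y b)"
    unfolding bilinear_form_def by (rule sum.swap)
  also have "\<dots> = bilinear_form m S y x"
    unfolding bilinear_form_def using assms by (simp add: mult_ac)
  finally show ?thesis .
qed

lemma even_bilinear_form_minus_diag_form: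
  assumes "\<forall>a b. S a b = S b a"
  shows "even (bilinear_form m S x x - diag_form m S x)"
proof (induction m)
  case 0
  then show ?case by (simp add: bilinear_form_def diag_form_def)
next
  case (Suc t)
  have "bilinear_form (Suc t) S x x - diag_form (Suc t) S x
      = (bilinear_form t S x x - diag_form t S x) + 2 * (\<Sum>a<t. x a * S a t * x t)
        + x t * (x t - 1) * S t t"
    using assms by (simp add: bilinear_form_def diag_form_def sum.distrib algebra_simps)
  then show ?case using Suc.IH by simp
qed

lemma quad_refinement_add:
  assumes "\<forall>a b. S a b = S b a"
  shows "quad_refinement p m S (\<lambda>a. x a + y a)
    = quad_refinement p m S x + quad_refinement p m S y + 2 * bilinear_form m S x y"
  using bilinear_form_sym[OF assms, of m y x]
  by (simp add: quad_refinement_def bilinear_form_add_left bilinear_form_add_right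
      diag_form_def distrib_left sum.distrib algebra_simps)

lemma quad_refinement_shift:
  assumes "\<forall>a b. S a b = S b a"
  shows "(2 * int p) dvd (quad_refinement p m S (\<lambda>a. z a + (- int p) * k a) - quad_refinement p m S z)"
proof -
  let ?c = "- int p" and ?z' = "\<lambda>a. z a + (- int p) * k a"
  obtain r where "bilinear_form m S k k - diag_form m S k = 2 * r"
    using even_bilinear_form_minus_diag_form[OF assms, of m k] by (elim evenE)
  then have r: "bilinear_form m S k k = diag_form m S k + 2 * r" by simp
  have B: "bilinear_form m S ?z' ?z' = bilinear_form m S z z + ?c * bilinear_form m S z k
      + ?c * bilinear_form m S k z + ?c * (?c * bilinear_form m S k k)"
    by (simp only: bilinear_form_add_left bilinear_form_add_right bilinear_form_smult_left
        bilinear_form_smult_right add.assoc)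
  have D: "diag_form m S ?z' = diag_form m S z + ?c * diag_form m S k"
    unfolding diag_form_def by (simp only: distrib_left sum.distrib sum_distrib_left mult_ac)
  have "quad_refinement p m S ?z' - quad_refinement p m S z
      = 2 * int p * (int p * r + diag_form m S k - bilinear_form m S z k)"
    unfolding quad_refinement_def B D r bilinear_form_sym[OF assms, of m k z] by (simp add: algebra_simps)
  then show ?thesis by simp
qed

lemma quad_refinement_mod_vec:
  assumes "\<forall>a b. S a b = S b a"
  shows "(2 * int p) dvd (quad_refinement p m S (mod_vec p m (\<lambda>i. v i + w i))
    - quad_refinement p m S v - quad_refinement p m S w - 2 * bilinear_form m S v w)"
proof -
  let ?k = "\<lambda>a. (v a + w a) div int p"
  have "quad_refinement p m S (mod_vec p m (\<lambda>i. v i + w i))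
      = quad_refinement p m S (\<lambda>a. (v a + w a) + (- int p) * ?k a)"
    unfolding quad_refinement_def bilinear_form_def diag_form_def
    by (simp add: mod_vec_def minus_mult_div_eq_mod[symmetric])
  then show ?thesis
    using quad_refinement_shift[OF assms, of p m "\<lambda>a. v a + w a" ?k] quad_refinement_add[OF assms, of p m v w]
    by (simp add: algebra_simps)
qed

section \<open>Changing the basis of the top\<close>

definition mat_vec :: "nat \<Rightarrow> nat \<Rightarrow> (nat \<Rightarrow> nat \<Rightarrow> int) \<Rightarrow> (nat \<Rightarrow> int) \<Rightarrow> nat \<Rightarrow> int" where
  "mat_vec p m T v = mod_vec p m (\<lambda>c. \<Sum>a<m. T c a * v a)"

definition congruent_mat :: "nat \<Rightarrow> (nat \<Rightarrow> nat \<Rightarrow> int) \<Rightarrow> (nat \<Rightarrow> nat \<Rightarrow> int) \<Rightarrow> nat \<Rightarrow> nat \<Rightarrow> int" where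
  "congruent_mat m T M = (\<lambda>a b. \<Sum>c<m. \<Sum>d<m. T c a * M c d * T d b)"

definition correction_mat :: "nat \<Rightarrow> (nat \<Rightarrow> nat \<Rightarrow> int) \<Rightarrow> (nat \<Rightarrow> nat \<Rightarrow> int) \<Rightarrow> nat \<Rightarrow> nat \<Rightarrow> int" where
  "correction_mat m T M = (\<lambda>a b. upper_form m M (\<lambda>c. T c a) (\<lambda>c. T c b)
     - (if a < b then congruent_mat m T M a b else 0))"

definition sym_upper :: "(nat \<Rightarrow> nat \<Rightarrow> int) \<Rightarrow> nat \<Rightarrow> nat \<Rightarrow> int" where
  "sym_upper C = (\<lambda>a b. if a \<le> b then C a b else C b a)"

text \<open>
  \<open>(x, v) \<mapsto> (x + \<gamma>(v), T v)\<close> is a homomorphism iff \<open>\<gamma>(v + w) - \<gamma>(v) - \<gamma>(w) \<equiv> B(v, w) / p\<close>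
  modulo integers, where \<open>B\<close> is the form of \<open>upper_form_mat_vec\<close>. The quadratic refinement
  of \<open>B\<close> is additive up to \<open>2 B\<close> modulo \<open>2 p\<close>, so \<open>\<gamma> = (p + 1) / (2 p)\<close> times it works
  for every \<open>p\<close>, including \<open>p = 2\<close>.
\<close>

definition top_correction ::
  "nat \<Rightarrow> nat \<Rightarrow> (nat \<Rightarrow> nat \<Rightarrow> int) \<Rightarrow> (nat \<Rightarrow> nat \<Rightarrow> int) \<Rightarrow> (nat \<Rightarrow> int) \<Rightarrow> rat"
  where "top_correction p m T M v =
    of_int ((int p + 1) * quad_refinement p m (sym_upper (correction_mat m T M)) v) / of_nat (2 * p)"

lemma mat_vec_in_residue_vecs: "p > 0 \<Longrightarrow> mat_vec p m T v \<in> residue_vecs p m"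
  by (simp add: mat_vec_def mod_vec_in_residue_vecs)

lemma mat_vec_add:
  "mat_vec p m T (mod_vec p m (\<lambda>i. v i + w i)) = mod_vec p m (\<lambda>i. mat_vec p m T v i + mat_vec p m T w i)"
  unfolding mod_vec_eq_iff mat_vec_def
proof (intro allI impI)
  fix c assume c: "c < m"
  have "[(\<Sum>a<m. T c a * mod_vec p m (\<lambda>i. v i + w i) a) = (\<Sum>a<m. T c a * (v a + w a))] (mod int p)"
    by (intro cong_sum cong_scalar_left) (auto intro: cong_mod_vec)
  moreover have "[(\<Sum>a<m. T c a * (v a + w a))
      = mod_vec p m (\<lambda>c. \<Sum>a<m. T c a * v a) c + mod_vec p m (\<lambda>c. \<Sum>a<m. T c a * w a) c] (mod int p)"
    using cong_add[OF cong_mod_vec[OF c] cong_mod_vec[OF c], of p "\<lambda>c. \<Sum>a<m. T c a * v a"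
        "\<lambda>c. \<Sum>a<m. T c a * w a"]
    by (simp add: distrib_left sum.distrib cong_sym)
  ultimately show "[(\<Sum>a<m. T c a * mod_vec p m (\<lambda>i. v i + w i) a)
      = mod_vec p m (\<lambda>c. \<Sum>a<m. T c a * v a) c + mod_vec p m (\<lambda>c. \<Sum>a<m. T c a * w a) c] (mod int p)"
    by (rule cong_trans)
qed

lemma mat_vec_inverse:
  assumes ST: "\<forall>i<m. \<forall>j<m. [(\<Sum>l<m. S i l * T l j) = (if i = j then 1 else 0)] (mod int p)"
    and p: "p > 0" and v: "v \<in> residue_vecs p m"
  shows "mat_vec p m S (mat_vec p m T v) = v"
proof (rule residue_vecs_eqI[OF mat_vec_in_residue_vecs[OF p] v])
  fix e assume e: "e < m"
  have swap: "(\<Sum>c<m. S e c * (\<Sum>a<m. T c a * v a)) = (\<Sum>a<m. (\<Sum>c<m. S e c * T c a) * v a)"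
  proof -
    have "(\<Sum>c<m. S e c * (\<Sum>a<m. T c a * v a)) = (\<Sum>c<m. \<Sum>a<m. S e c * T c a * v a)"
      by (simp add: sum_distrib_left mult.assoc)
    also have "\<dots> = (\<Sum>a<m. \<Sum>c<m. S e c * T c a * v a)"
      by (rule sum.swap)
    finally show ?thesis by (simp add: sum_distrib_right)
  qed
  have delta: "(\<Sum>a<m. (if e = a then 1 else 0) * v a) = v e"
    using e by (simp add: if_distrib[of "\<lambda>x. x * _"] cong: if_cong)
  have "[mat_vec p m S (mat_vec p m T v) e = (\<Sum>c<m. S e c * mat_vec p m T v c)] (mod int p)"
    unfolding mat_vec_def[of p m S] by (rule cong_mod_vec[OF e])
  also have "[(\<Sum>c<m. S e c * mat_vec p m T v c) = (\<Sum>c<m. S e c * (\<Sum>a<m. T c a * v a))] (mod int p)"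
    unfolding mat_vec_def by (intro cong_sum cong_scalar_left cong_mod_vec) simp
  also have "[(\<Sum>c<m. S e c * (\<Sum>a<m. T c a * v a)) = v e] (mod int p)"
    unfolding swap delta[symmetric] using ST e by (intro cong_sum cong_scalar_right) simp
  finally show "[mat_vec p m S (mat_vec p m T v) e = v e] (mod int p)" .
qed

lemma upper_form_sum_left:
  "upper_form m M (\<lambda>i. \<Sum>a<k. f a i) y = (\<Sum>a<k. upper_form m M (f a) y)"
proof -
  have "upper_form m M (\<lambda>i. \<Sum>a<k. f a i) y = (\<Sum>j<m. \<Sum>i<j. \<Sum>a<k. f a i * y j * M i j)"
    unfolding upper_form_def by (simp add: sum_distrib_right)
  also have "\<dots> = (\<Sum>j<m. \<Sum>a<k. \<Sum>i<j. f a i * y j * M i j)"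
    by (rule sum.cong[OF refl]) (rule sum.swap)
  also have "\<dots> = (\<Sum>a<k. upper_form m M (f a) y)"
    unfolding upper_form_def by (rule sum.swap)
  finally show ?thesis .
qed

lemma upper_form_sum_right:
  "upper_form m M x (\<lambda>i. \<Sum>a<k. f a i) = (\<Sum>a<k. upper_form m M x (f a))"
proof -
  have "upper_form m M x (\<lambda>i. \<Sum>a<k. f a i) = (\<Sum>j<m. \<Sum>i<j. \<Sum>a<k. x i * f a j * M i j)"
    unfolding upper_form_def by (simp add: sum_distrib_left sum_distrib_right)
  also have "\<dots> = (\<Sum>j<m. \<Sum>a<k. \<Sum>i<j. x i * f a j * M i j)"
    by (rule sum.cong[OF refl]) (rule sum.swap)
  also have "\<dots> = (\<Sum>a<k. upper_form m M x (f a))"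
    unfolding upper_form_def by (rule sum.swap)
  finally show ?thesis .
qed

lemma upper_form_smult:
  "upper_form m M (\<lambda>i. c * x i) y = c * upper_form m M x y"
  "upper_form m M x (\<lambda>i. c * y i) = c * upper_form m M x y"
  by (simp_all add: upper_form_def sum_distrib_left mult_ac)

lemma upper_form_mat_mult:
  "upper_form m M (\<lambda>c. \<Sum>a<m. T c a * v a) (\<lambda>c. \<Sum>b<m. T c b * w b)
    = bilinear_form m (\<lambda>a b. upper_form m M (\<lambda>c. T c a) (\<lambda>c. T c b)) v w"
proof -
  have "upper_form m M (\<lambda>c. \<Sum>a<m. T c a * v a) (\<lambda>c. \<Sum>b<m. T c b * w b)
      = (\<Sum>a<m. upper_form m M (\<lambda>c. v a * T c a) (\<lambda>c. \<Sum>b<m. T c b * w b))"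
    using upper_form_sum_left[of m M "\<lambda>a c. v a * T c a" m] by (simp add: mult_ac)
  also have "\<dots> = (\<Sum>a<m. v a * (\<Sum>b<m. upper_form m M (\<lambda>c. T c a) (\<lambda>c. w b * T c b)))"
    using upper_form_sum_right[of m M _ "\<lambda>b c. w b * T c b" m] by (simp add: upper_form_smult mult_ac)
  also have "\<dots> = (\<Sum>a<m. \<Sum>b<m. v a * w b * upper_form m M (\<lambda>c. T c a) (\<lambda>c. T c b))"
    by (simp add: upper_form_smult sum_distrib_left mult_ac)
  finally show ?thesis by (simp add: bilinear_form_def mult_ac)
qed

lemma upper_form_eq_bilinear_form:
  "upper_form m M v w = bilinear_form m (\<lambda>a b. if a < b then M a b else 0) v w"
proof -
  have "upper_form m M v w = (\<Sum>b<m. \<Sum>a<m. if a < b then v a * M a b * w b else 0)"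
    unfolding upper_form_def
  proof (rule sum.cong[OF refl])
    fix b assume "b \<in> {..<m}"
    then have lt: "{..<b} = {a \<in> {..<m}. a < b}" by auto
    show "(\<Sum>a<b. v a * w b * M a b) = (\<Sum>a<m. if a < b then v a * M a b * w b else 0)"
      unfolding lt by (simp only: sum.inter_filter[OF finite_lessThan]) (simp add: mult_ac cong: if_cong)
  qed
  also have "\<dots> = bilinear_form m (\<lambda>a b. if a < b then M a b else 0) v w"
    unfolding bilinear_form_def by (subst sum.swap) (intro sum.cong refl, simp)
  finally show ?thesis .
qed

lemma bilinear_form_diff_matrix:
  "bilinear_form m (\<lambda>a b. X a b - Y a b) v w = bilinear_form m X v w - bilinear_form m Y v w"
  by (simp add: bilinear_form_def sum_subtractf right_diff_distrib left_diff_distrib)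

lemma bilinear_form_cong_matrix:
  assumes "\<And>a b. a < m \<Longrightarrow> b < m \<Longrightarrow> [X a b = Y a b] (mod int p)"
  shows "[bilinear_form m X v w = bilinear_form m Y v w] (mod int p)"
  unfolding bilinear_form_def using assms by (intro cong_sum cong_mult cong_refl) auto

lemma sym_upper_sym: "\<forall>a b. sym_upper C a b = sym_upper C b a"
  by (simp add: sym_upper_def)

lemma correction_mat_cong_sym_upper:
  assumes M: "skew_symmetric_mod p m M" and a: "a < m" and b: "b < m"
  shows "[correction_mat m T M a b = sym_upper (correction_mat m T M) a b] (mod int p)"
proof (cases "a \<le> b")
  case True
  then show ?thesis by (simp add: sym_upper_def)
next
  case False
  let ?ta = "\<lambda>c. T c a" and ?tb = "\<lambda>c. T c b"
  have "[upper_form m M ?tb ?ta - upper_form m M ?ta ?tb = congruent_mat m T M b a] (mod int p)"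
    using skew_symmetric_mod_upper_form[OF M] by (simp add: congruent_mat_def bilinear_form_def)
  then have "int p dvd - (upper_form m M ?tb ?ta - upper_form m M ?ta ?tb - congruent_mat m T M b a)"
    by (simp only: dvd_minus_iff cong_iff_dvd_diff)
  moreover have "correction_mat m T M a b - correction_mat m T M b a
      = - (upper_form m M ?tb ?ta - upper_form m M ?ta ?tb - congruent_mat m T M b a)"
    using False by (simp add: correction_mat_def)
  ultimately show ?thesis
    using False by (simp add: sym_upper_def cong_iff_dvd_diff)
qed

lemma upper_form_mat_vec:
  assumes "skew_symmetric_mod p m M"
  shows "[upper_form m M (mat_vec p m T v) (mat_vec p m T w) - upper_form m (congruent_mat m T M) v w
    = bilinear_form m (sym_upper (correction_mat m T M)) v w] (mod int p)"
proof -
  let ?Tv = "\<lambda>c. \<Sum>a<m. T c a * v a" and ?Tw = "\<lambda>c. \<Sum>b<m. T c b * w b"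
  have "[upper_form m M (mat_vec p m T v) (mat_vec p m T w) = upper_form m M ?Tv ?Tw] (mod int p)"
    unfolding upper_form_def mat_vec_def by (intro cong_sum cong_mult cong_refl) (auto intro: cong_mod_vec)
  moreover have "upper_form m M ?Tv ?Tw - upper_form m (congruent_mat m T M) v w
      = bilinear_form m (correction_mat m T M) v w"
    unfolding correction_mat_def bilinear_form_diff_matrix upper_form_mat_mult
      upper_form_eq_bilinear_form[of m "congruent_mat m T M"] by (simp add: if_distrib)
  moreover have "[bilinear_form m (correction_mat m T M) v w
      = bilinear_form m (sym_upper (correction_mat m T M)) v w] (mod int p)"
    by (intro bilinear_form_cong_matrix correction_mat_cong_sym_upper[OF assms])
  ultimately show ?thesis by (metis (no_types, lifting) cong_diff cong_refl cong_trans)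
qed

lemma p_fraction_succ_divide_double: "p_fraction p (of_int ((int p + 1) * X) / of_nat (2 * p))"
proof (cases "even p")
  case True
  then obtain q where q: "p = 2 * q" by blast
  have "of_int ((int p + 1) * X) / of_nat (2 * p) * of_nat (p ^ 2) = (of_int ((int p + 1) * X * int q) :: rat)"
    using q by (cases "q = 0") (simp_all add: power2_eq_square field_simps)
  then show ?thesis unfolding p_fraction_def by (metis Ints_of_int)
next
  case False
  then obtain q where q: "int p + 1 = 2 * q" by (metis even_plus_one_iff even_of_nat evenE)
  have "p > 0" using False by (intro gr0I) simp
  then have "of_int ((int p + 1) * X) / of_nat (2 * p) * of_nat (p ^ 1) = (of_int (q * X) :: rat)"
    unfolding q by (simp add: field_simps)
  then show ?thesis unfolding p_fraction_def by (metis Ints_of_int)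
qed

lemma p_fraction_top_correction: "p_fraction p (top_correction p m T M v)"
  unfolding top_correction_def by (rule p_fraction_succ_divide_double)

lemma top_correction_cocycle:
  assumes p: "p > 0" and M: "skew_symmetric_mod p m M"
  shows "of_int (upper_form m (congruent_mat m T M) v w) / of_nat p
    + top_correction p m T M (mod_vec p m (\<lambda>i. v i + w i)) - top_correction p m T M v
    - top_correction p m T M w - of_int (upper_form m M (mat_vec p m T v) (mat_vec p m T w)) / of_nat p
    \<in> \<int>"
proof -
  let ?S = "sym_upper (correction_mat m T M)"
  let ?Q = "quad_refinement p m ?S" and ?B = "bilinear_form m ?S v w"
  let ?U = "upper_form m M (mat_vec p m T v) (mat_vec p m T w)"
    and ?U' = "upper_form m (congruent_mat m T M) v w"
  obtain t where t: "?Q (mod_vec p m (\<lambda>i. v i + w i)) - ?Q v - ?Q w - 2 * ?B = 2 * int p * t"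
    using quad_refinement_mod_vec[where S = ?S and p = p and m = m and v = v and w = w, OF sym_upper_sym]
    by (elim dvdE)
  obtain s where s: "?U - ?U' - ?B = int p * s"
    using upper_form_mat_vec[OF M, of T v w] by (auto simp: cong_iff_dvd_diff elim!: dvdE)
  have "of_int ?U' / of_nat p + top_correction p m T M (mod_vec p m (\<lambda>i. v i + w i))
      - top_correction p m T M v - top_correction p m T M w - of_int ?U / of_nat p
      = of_int (2 * ?U' + (int p + 1) * (?Q (mod_vec p m (\<lambda>i. v i + w i)) - ?Q v - ?Q w) - 2 * ?U)
        / (of_nat (2 * p) :: rat)"
    using p by (simp add: top_correction_def field_simps)
  also have "2 * ?U' + (int p + 1) * (?Q (mod_vec p m (\<lambda>i. v i + w i)) - ?Q v - ?Q w) - 2 * ?U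
      = int (2 * p) * (?B + (int p + 1) * t - s)"
    using t s by (simp add: algebra_simps)
  also have "of_int (int (2 * p) * (?B + (int p + 1) * t - s)) / (of_nat (2 * p) :: rat)
      = of_int (?B + (int p + 1) * t - s)"
    using p by simp
  finally show ?thesis by simp
qed

definition top_change :: "nat \<Rightarrow> nat \<Rightarrow> nat \<Rightarrow> (nat \<Rightarrow> nat \<Rightarrow> int) \<Rightarrow> (nat \<Rightarrow> nat \<Rightarrow> nat \<Rightarrow> int)
    \<Rightarrow> (nat \<Rightarrow> rat) \<times> (nat \<Rightarrow> int) \<Rightarrow> (nat \<Rightarrow> rat) \<times> (nat \<Rightarrow> int)"
  where "top_change p n m T A g =
    (frac_vec n (\<lambda>k. fst g k + top_correction p m T (A k) (snd g)), mat_vec p m T (snd g))"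

lemma top_change_in_carrier:
  assumes "p > 0" "g \<in> carrier (chernikov_group p n m B)"
  shows "top_change p n m T A g \<in> carrier (chernikov_group p n m A)"
  using assms by (auto simp: top_change_def carrier_chernikov_group mat_vec_in_residue_vecs
      prufer_vecs_p_fraction p_fraction_top_correction intro!: frac_vec_in_prufer_vecs p_fraction_add)

lemma top_change_hom:
  assumes p: "p > 0" and A: "skew_tuple p n m A"
  shows "top_change p n m T A \<in> hom (chernikov_group p n m (\<lambda>k. congruent_mat m T (A k))) (chernikov_group p n m A)"
proof (rule homI)
  let ?G = "chernikov_group p n m (\<lambda>k. congruent_mat m T (A k))" and ?H = "chernikov_group p n m A"
  let ?\<gamma> = "\<lambda>k. top_correction p m T (A k)"
  show "top_change p n m T A g \<in> carrier ?H" if "g \<in> carrier ?G" for g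
    using top_change_in_carrier[OF p that] .
  fix g h :: "(nat \<Rightarrow> rat) \<times> (nat \<Rightarrow> int)"
  obtain x v y w where gh: "g = (x, v)" "h = (y, w)" by fastforce
  let ?cT = "\<lambda>k. of_int (upper_form m (congruent_mat m T (A k)) v w) / (of_nat p :: rat)"
  let ?cA = "\<lambda>k. of_int (upper_form m (A k) (mat_vec p m T v) (mat_vec p m T w)) / (of_nat p :: rat)"
  have "frac_vec n (\<lambda>k. frac_vec n (\<lambda>k. x k + y k + ?cT k) k + ?\<gamma> k (mod_vec p m (\<lambda>i. v i + w i)))
      = frac_vec n (\<lambda>k. frac_vec n (\<lambda>k. x k + ?\<gamma> k v) k + frac_vec n (\<lambda>k. y k + ?\<gamma> k w) k + ?cA k)"
    unfolding frac_vec_eq_iff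
  proof (intro allI impI)
    fix k assume k: "k < n"
    have M: "skew_symmetric_mod p m (A k)" using A k by (simp add: skew_tuple_def)
    let ?F1 = "frac_vec n (\<lambda>k. x k + y k + ?cT k) k" and ?F2 = "frac_vec n (\<lambda>k. x k + ?\<gamma> k v) k"
      and ?F3 = "frac_vec n (\<lambda>k. y k + ?\<gamma> k w) k"
    have "?F1 + ?\<gamma> k (mod_vec p m (\<lambda>i. v i + w i)) - (?F2 + ?F3 + ?cA k)
        = ((?F1 - (x k + y k + ?cT k)) - (?F2 - (x k + ?\<gamma> k v)) - (?F3 - (y k + ?\<gamma> k w)))
          + (?cT k + ?\<gamma> k (mod_vec p m (\<lambda>i. v i + w i)) - ?\<gamma> k v - ?\<gamma> k w - ?cA k)"
      by (simp add: algebra_simps)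
    also have "\<dots> \<in> \<int>"
    proof (rule Ints_add)
      show "(?F1 - (x k + y k + ?cT k)) - (?F2 - (x k + ?\<gamma> k v)) - (?F3 - (y k + ?\<gamma> k w)) \<in> \<int>"
        using k by (intro Ints_diff frac_vec_diff_Ints)
    qed (rule top_correction_cocycle[OF p M])
    finally show "?F1 + ?\<gamma> k (mod_vec p m (\<lambda>i. v i + w i)) - (?F2 + ?F3 + ?cA k) \<in> \<int>" .
  qed
  then show "top_change p n m T A (g \<otimes>\<^bsub>?G\<^esub> h) = top_change p n m T A g \<otimes>\<^bsub>?H\<^esub> top_change p n m T A h"
    by (simp add: gh top_change_def mult_chernikov_group mat_vec_add cocycle_upper_form)
qed

lemma top_change_bij:
  assumes p: "p > 0" and T: "invertible_mod p m T"
  shows "bij_betw (top_change p n m T A)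
    (carrier (chernikov_group p n m (\<lambda>k. congruent_mat m T (A k)))) (carrier (chernikov_group p n m A))"
proof -
  let ?G = "chernikov_group p n m (\<lambda>k. congruent_mat m T (A k))" and ?H = "chernikov_group p n m A"
  let ?\<gamma> = "\<lambda>k. top_correction p m T (A k)"
  obtain T' where T': "\<forall>i<m. \<forall>j<m. [(\<Sum>l<m. T i l * T' l j) = (if i = j then 1 else 0)] (mod int p)"
      "\<forall>i<m. \<forall>j<m. [(\<Sum>l<m. T' i l * T l j) = (if i = j then 1 else 0)] (mod int p)"
    using T unfolding invertible_mod_def by blast
  define \<psi> where "\<psi> h = (frac_vec n (\<lambda>k. fst h k - ?\<gamma> k (mat_vec p m T' (snd h))), mat_vec p m T' (snd h))"
    for h :: "(nat \<Rightarrow> rat) \<times> (nat \<Rightarrow> int)"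
  have "\<psi> h \<in> carrier ?G" if "h \<in> carrier ?H" for h
    using that p by (auto simp: \<psi>_def carrier_chernikov_group mat_vec_in_residue_vecs prufer_vecs_p_fraction
        p_fraction_top_correction intro!: frac_vec_in_prufer_vecs p_fraction_diff)
  moreover have "\<psi> (top_change p n m T A g) = g" if gG: "g \<in> carrier ?G" for g
  proof -
    obtain x v where g: "g = (x, v)" "x \<in> prufer_vecs p n" "v \<in> residue_vecs p m"
      using gG by (cases g) (auto simp: carrier_chernikov_group)
    have "frac_vec n (\<lambda>k. frac_vec n (\<lambda>k. x k + ?\<gamma> k v) k - ?\<gamma> k v) = x"
      by (rule frac_vec_eqI[OF g(2)])
        (use frac_vec_diff_Ints[of _ n "\<lambda>k. x k + ?\<gamma> k v"] in \<open>simp add: algebra_simps\<close>)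
    then show ?thesis by (simp add: g top_change_def \<psi>_def mat_vec_inverse[OF T'(2) p g(3)])
  qed
  moreover have "top_change p n m T A (\<psi> h) = h" if hH: "h \<in> carrier ?H" for h
  proof -
    obtain y u where h: "h = (y, u)" "y \<in> prufer_vecs p n" "u \<in> residue_vecs p m"
      using hH by (cases h) (auto simp: carrier_chernikov_group)
    let ?v = "mat_vec p m T' u"
    have "frac_vec n (\<lambda>k. frac_vec n (\<lambda>k. y k - ?\<gamma> k ?v) k + ?\<gamma> k ?v) = y"
      by (rule frac_vec_eqI[OF h(2)])
        (use frac_vec_diff_Ints[of _ n "\<lambda>k. y k - ?\<gamma> k ?v"] in \<open>simp add: algebra_simps\<close>)
    then show ?thesis by (simp add: h top_change_def \<psi>_def mat_vec_inverse[OF T'(1) p h(3)])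
  qed
  ultimately show ?thesis
    using top_change_in_carrier[OF p] by (intro bij_betw_byWitness[where f' = \<psi>]) auto
qed

lemma top_change_iso:
  assumes "p > 0" "invertible_mod p m T" "skew_tuple p n m A"
  shows "chernikov_group p n m (\<lambda>k. congruent_mat m T (A k)) \<cong> chernikov_group p n m A"
  using top_change_hom[OF assms(1,3)] top_change_bij[OF assms(1,2)]
  unfolding is_iso_def iso_def by blast

section \<open>Weakly congruent tuples give isomorphic groups\<close>

lemma skew_tuple_comb_tuple:
  assumes "skew_tuple p n m A"
  shows "skew_tuple p n m (comb_tuple n Q A)"
  unfolding skew_tuple_def skew_symmetric_mod_def
proof (intro allI impI)
  fix j x assume "j < n"
  have "(\<Sum>a<m. \<Sum>b<m. x a * comb_tuple n Q A j a b * x b)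
      = (\<Sum>i<n. Q i j * (\<Sum>a<m. \<Sum>b<m. x a * A i a b * x b))"
  proof -
    have "(\<Sum>a<m. \<Sum>b<m. x a * comb_tuple n Q A j a b * x b)
        = (\<Sum>a<m. \<Sum>b<m. \<Sum>i<n. Q i j * (x a * A i a b * x b))"
      by (simp add: comb_tuple_def sum_distrib_left sum_distrib_right mult_ac)
    also have "\<dots> = (\<Sum>i<n. \<Sum>a<m. \<Sum>b<m. Q i j * (x a * A i a b * x b))"
      by (simp only: sum.swap[of _ "{..<n}"])
    finally show ?thesis by (simp add: sum_distrib_left)
  qed
  moreover have "[(\<Sum>i<n. Q i j * (\<Sum>a<m. \<Sum>b<m. x a * A i a b * x b)) = (\<Sum>i<n. Q i j * 0)] (mod int p)"
    using assms by (intro cong_sum cong_scalar_left) (simp add: skew_tuple_def skew_symmetric_mod_def)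
  ultimately show "[(\<Sum>a<m. \<Sum>b<m. x a * comb_tuple n Q A j a b * x b) = 0] (mod int p)" by simp
qed

lemma invertible_mod_transpose:
  assumes "invertible_mod p d P"
  shows "invertible_mod p d (\<lambda>i j. P j i)"
proof -
  obtain P' where P': "\<forall>i<d. \<forall>j<d. [(\<Sum>l<d. P i l * P' l j) = (if i = j then 1 else 0)] (mod int p) \<and>
      [(\<Sum>l<d. P' i l * P l j) = (if i = j then 1 else 0)] (mod int p)"
    using assms unfolding invertible_mod_def by blast
  show ?thesis unfolding invertible_mod_def
  proof (intro exI[of _ "\<lambda>i j. P' j i"] allI impI conjI)
    fix i j assume "i < d" "j < d"
    then show "[(\<Sum>l<d. P l i * P' j l) = (if i = j then 1 else 0)] (mod int p)"
      and "[(\<Sum>l<d. P' l i * P j l) = (if i = j then 1 else 0)] (mod int p)"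
      using P' by (simp_all add: mult.commute eq_commute[of i j])
  qed
qed

lemma chernikov_group_cong:
  assumes "\<And>k i j. k < n \<Longrightarrow> i < m \<Longrightarrow> j < m \<Longrightarrow> [A k i j = B k i j] (mod int p)"
  shows "chernikov_group p n m A = chernikov_group p n m B"
proof -
  have "frac (X + of_int (cocycle m A k v w) / of_nat p) = frac (X + of_int (cocycle m B k v w) / of_nat p)"
    if "k < n" for X :: rat and k v w
  proof -
    have "[cocycle m A k v w = cocycle m B k v w] (mod int p)"
      unfolding cocycle_def using assms that by (intro cong_sum cong_scalar_left) auto
    then show ?thesis
      using cong_imp_divide_diff_Ints by (simp add: frac_eq_iff_diff_Ints)
  qed
  then show ?thesis unfolding chernikov_group_def by (simp add: fun_eq_iff split: prod.splits)
qed

lemma congruent_mat_comb_tuple: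
  "congruent_mat m (\<lambda>c a. P a c) (comb_tuple n Q A k) a b
    = (\<Sum>i<n. Q i k * (\<Sum>c<m. \<Sum>d<m. P a c * A i c d * P b d))"
proof -
  have "congruent_mat m (\<lambda>c a. P a c) (comb_tuple n Q A k) a b
      = (\<Sum>c<m. \<Sum>d<m. \<Sum>i<n. Q i k * (P a c * A i c d * P b d))"
    by (simp add: congruent_mat_def comb_tuple_def sum_distrib_left sum_distrib_right mult_ac)
  also have "\<dots> = (\<Sum>i<n. \<Sum>c<m. \<Sum>d<m. Q i k * (P a c * A i c d * P b d))"
    by (simp only: sum.swap[of _ "{..<n}"])
  finally show ?thesis by (simp add: sum_distrib_left)
qed

theorem weakly_congruent_imp_iso:
  assumes p: "p > 0" and A: "skew_tuple p n m A" and wc: "weakly_congruent p n m A A'"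
  shows "chernikov_group p n m A \<cong> chernikov_group p n m A'"
proof -
  obtain P Q where P: "invertible_mod p m P" and Q: "invertible_mod p n Q"
    and A': "\<forall>j<n. \<forall>a<m. \<forall>b<m.
      [A' j a b = (\<Sum>i<n. Q i j * (\<Sum>c<m. \<Sum>d<m. P a c * A i c d * P b d))] (mod int p)"
    using wc unfolding weakly_congruent_def by blast
  let ?T = "\<lambda>c a. P a c"
  have "chernikov_group p n m A \<cong> chernikov_group p n m (comb_tuple n Q A)"
    by (rule bottom_change_iso[OF Q])
  also have "\<dots> \<cong> chernikov_group p n m (\<lambda>k. congruent_mat m ?T (comb_tuple n Q A k))"
    using top_change_iso[OF p invertible_mod_transpose[OF P] skew_tuple_comb_tuple[OF A]]
    by (rule group.iso_sym[OF group_chernikov_group[OF p]])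
  also have "\<dots> = chernikov_group p n m A'"
  proof (rule chernikov_group_cong)
    fix k a b assume "k < n" "a < m" "b < m"
    then show "[congruent_mat m ?T (comb_tuple n Q A k) a b = A' k a b] (mod int p)"
      using A' by (simp add: congruent_mat_comb_tuple cong_sym)
  qed
  finally show ?thesis .
qed

theorem corollary1p3:
  fixes p n m :: nat and A A' :: "nat \<Rightarrow> nat \<Rightarrow> nat \<Rightarrow> int"
  assumes "prime p"
    and "skew_tuple p n m A"
    and "skew_tuple p n m A'"
  shows "chernikov_group p n m A \<cong> chernikov_group p n m A' \<longleftrightarrow> weakly_congruent p n m A A'"
  using assms iso_imp_weakly_congruent[OF prime_gt_1_nat] weakly_congruent_imp_iso[OF prime_gt_0_nat]
  by blast

end
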